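(* Let $r>2$ and fix $i_-$ with $1\le i_-\le r-1$; put $i_+=i_-+1$. Denote the generators of $H^e_{r+1}$ by $\check T_i$ ($i\in\mathbb Z/(r+1)\mathbb Z$) and $\check T_\rho^{\pm1}$. Then the assignment \[ T_i\mapsto\begin{cases}\check T_i & 1\le i<i_-,\\ \check T_{i_-}\check T_{i_+}\check T_{i_-}^{-1} & i=i_-,\\ \check T_{i+1} & i_+\le i\le r,\end{cases}\qquad T_\rho\mapsto \check T_{i_+}^{-1}\check T_\rho,\quad T_\rho^{-1}\mapsto \check T_\rho^{-1}\check T_{i_+} \] (where the generators $T_i$ of $H^e_r$ are indexed by $i\in\{1,\dots,r\}$ representing $\mathbb Z/r\mathbb Z$) extends to an injective $\mathcal A$-algebra homomorphism $\phi^e_v:H^e_r\to H^e_{r+1}$.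
   Context: $\mathcal A=\mathbb Z[v,v^{-1}]$. For $r>2$, the extended affine Hecke algebra $H^e_r$ of type A (Iwahori–Matsumoto presentation) is the associative unital $\mathcal A$-algebra with generators $T_i$ ($i\in\mathbb Z/r\mathbb Z$) and $T_\rho,T_\rho^{-1}$, subject to: $(T_i-v)(T_i+v^{-1})=0$; $T_iT_{i+1}T_i=T_{i+1}T_iT_{i+1}$; $T_iT_j=T_jT_i$ whenever $i-j\not\equiv\pm1\pmod r$; $T_\rho T_i=T_{i+1}T_\rho$; $T_\rho T_\rho^{-1}=T_\rho^{-1}T_\rho=1$ (all indices taken mod $r$). *)

theory Defs
  imports "HOL-Library.Poly_Mapping" "HOL-Algebra.QuotRing" "HOL-Number_Theory.Cong"
begin

text \<open>Laurent polynomials: the group ring of (int,+) over int, i.e. finitely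
  supported functions int => int with convolution product.\<close>
type_synonym laurent = "int \<Rightarrow>\<^sub>0 int"

definition vv :: laurent where "vv = Poly_Mapping.single 1 1"
definition vinv :: laurent where "vinv = Poly_Mapping.single (-1) 1"

datatype 'a word = Word "'a list"

instantiation word :: (type) monoid_add
begin
definition zero_word :: "'a word" where "zero_word = Word []"
fun plus_word :: "'a word \<Rightarrow> 'a word \<Rightarrow> 'a word" where
  "plus_word (Word xs) (Word ys) = Word (xs @ ys)"
instance
proof
  fix a b c :: "'a word"
  show "a + b + c = a + (b + c)" by (cases a; cases b; cases c) auto
  show "0 + a = a" by (cases a) (auto simp: zero_word_def)
  show "a + 0 = a" by (cases a) (auto simp: zero_word_def)
qed
end

datatype gen = T int | Rho | RhoInv

text \<open>Free associative A-algebra: finitely supported functions from words to A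
  with the monoid-algebra (convolution) product.\<close>
type_synonym freealg = "gen word \<Rightarrow>\<^sub>0 laurent"

definition letter :: "gen \<Rightarrow> freealg" where
  "letter x = Poly_Mapping.single (Word [x]) 1"

definition const :: "laurent \<Rightarrow> freealg" where
  "const a = Poly_Mapping.single (Word []) a"

definition FA :: "freealg ring" where
  "FA = \<lparr>carrier = UNIV, monoid.mult = (*), one = 1, zero = 0, add = (+)\<rparr>"

text \<open>Generators T_i are indexed by all integers i, with T_i identified with
  T_(i mod r) (indices are taken mod r).\<close>
definition rels :: "nat \<Rightarrow> freealg set" where
  "rels r =
     {letter (T i) - letter (T (i mod int r)) | i. True}
   \<union> {(letter (T i) - const vv) * (letter (T i) + const vinv) | i. True}
   \<union> {letter (T i) * letter (T (i+1)) * letter (T i)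
        - letter (T (i+1)) * letter (T i) * letter (T (i+1)) | i. True}
   \<union> {letter (T i) * letter (T j) - letter (T j) * letter (T i) | i j.
        \<not> [i - j = 1] (mod int r) \<and> \<not> [i - j = -1] (mod int r)}
   \<union> {letter Rho * letter (T i) - letter (T (i+1)) * letter Rho | i. True}
   \<union> {letter Rho * letter RhoInv - 1, letter RhoInv * letter Rho - 1}"

definition Hecke :: "nat \<Rightarrow> freealg set ring" where
  "Hecke r = FA Quot (genideal FA (rels r))"

definition cls :: "nat \<Rightarrow> freealg \<Rightarrow> freealg set" where
  "cls r x = a_r_coset FA (genideal FA (rels r)) x"

definition gT :: "nat \<Rightarrow> int \<Rightarrow> freealg set" where "gT r i = cls r (letter (T i))"
definition gRho :: "nat \<Rightarrow> freealg set" where "gRho r = cls r (letter Rho)"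
definition gRhoInv :: "nat \<Rightarrow> freealg set" where "gRhoInv r = cls r (letter RhoInv)"
definition scal :: "nat \<Rightarrow> laurent \<Rightarrow> freealg set" where "scal r a = cls r (const a)"

definition hecke_alg_hom :: "nat \<Rightarrow> nat \<Rightarrow> (freealg set \<Rightarrow> freealg set) set" where
  "hecke_alg_hom r s = {\<phi> \<in> ring_hom (Hecke r) (Hecke s). \<forall>a. \<phi> (scal r a) = scal s a}"

end

theory Submission
  imports Defs "HOL-Library.Function_Algebras"
begin

text \<open>
  The images of the generators satisfy the defining relations of H^e_r: the image of T_(i_-) is
  a conjugate of the generator T_(i_+) of H^e_(r+1) and so again satisfies the quadratic relation,
  and the braid, commutation and T_rho-relations reduce, case by case along the cyclic index, to
  relations of H^e_(r+1). Hence substituting the images for the letters of the free algebra maps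
  the defining ideal of H^e_r into that of H^e_(r+1), and this substitution induces phi.

  For injectivity, H^e_(r+1) is made to act on sequences Z -> H^e_r: T_rho shifts, and T_c acts
  at position k according to the residue j of c - i_- - 1 - k modulo r + 1, by T_(j + i_-) if
  0 < j < r, and for j = 0, r by bringing in a neighbouring entry through T_rho or its inverse.
  These operators satisfy the relations of H^e_(r+1), and phi(x) sends the sequence concentrated
  at 0 with value h to the one with value x h. Taking h = 1 shows that phi(x) = 0 forces x = 0.
\<close>

section \<open>The free algebra and the Hecke quotients\<close>

lemma FA_simps [simp]: "carrier FA = UNIV" "monoid.mult FA = (*)" "one FA = 1" "zero FA = 0" "add FA = (+)"
  by (simp_all add: FA_def)

lemma ring_FA: "ring FA"
proof (rule ringI)
  show "abelian_group FA"
    by (rule abelian_groupI) (auto simp: add.assoc add.commute intro: exI[of _ "- x" for x])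
  show "monoid FA" by (rule monoidI) (auto simp: mult.assoc)
qed (auto simp: distrib_left distrib_right)

interpretation FA: ring FA by (rule ring_FA)

lemma FA_ainv [simp]: "a_inv FA x = - x"
  by (rule FA.minus_equality) auto

lemma FA_minus [simp]: "a_minus FA x y = x - y"
  by (simp add: a_minus_def)

lemma ideal_FA_I:
  assumes "0 \<in> J" "\<And>x y. x \<in> J \<Longrightarrow> y \<in> J \<Longrightarrow> x + y \<in> J" "\<And>x. x \<in> J \<Longrightarrow> - x \<in> J"
    "\<And>x a. x \<in> J \<Longrightarrow> a * x \<in> J" "\<And>x a. x \<in> J \<Longrightarrow> x * a \<in> J"
  shows "ideal J FA"
proof (rule idealI[OF ring_FA])
  show "subgroup J (add_monoid FA)"
    by (rule FA.add.subgroupI) (use assms in auto)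
qed (use assms in auto)

definition hecke_ideal :: "nat \<Rightarrow> freealg set" where "hecke_ideal n = genideal FA (rels n)"

lemma ideal_hecke_ideal: "ideal (hecke_ideal n) FA"
  unfolding hecke_ideal_def by (rule FA.genideal_ideal) auto

lemma hecke_ideal_rel: "x \<in> rels n \<Longrightarrow> x \<in> hecke_ideal n"
  unfolding hecke_ideal_def using FA.genideal_self[of "rels n"] by auto

lemma hecke_ideal_minimal: "ideal J FA \<Longrightarrow> rels n \<subseteq> J \<Longrightarrow> hecke_ideal n \<subseteq> J"
  unfolding hecke_ideal_def by (rule FA.genideal_minimal)

lemma rels_cases [consumes 1, case_names mod quadratic braid commute rho rho_rhoinv rhoinv_rho]:
  assumes "x \<in> rels n"
  obtains (mod) i where "x = letter (T i) - letter (T (i mod int n))"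
  | (quadratic) i where "x = (letter (T i) - const vv) * (letter (T i) + const vinv)"
  | (braid) i where "x = letter (T i) * letter (T (i + 1)) * letter (T i)
      - letter (T (i + 1)) * letter (T i) * letter (T (i + 1))"
  | (commute) i j where "x = letter (T i) * letter (T j) - letter (T j) * letter (T i)"
      "\<not> [i - j = 1] (mod int n)" "\<not> [i - j = -1] (mod int n)"
  | (rho) i where "x = letter Rho * letter (T i) - letter (T (i + 1)) * letter Rho"
  | (rho_rhoinv) "x = letter Rho * letter RhoInv - 1"
  | (rhoinv_rho) "x = letter RhoInv * letter Rho - 1"
  using assms unfolding rels_def by blast

lemma hecke_ideal_zero: "0 \<in> hecke_ideal n" using ideal.Icarr ideal_hecke_ideal additive_subgroup.zero_closed
  by (metis FA_simps(4) ideal_def)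
lemma hecke_ideal_add: "x \<in> hecke_ideal n \<Longrightarrow> y \<in> hecke_ideal n \<Longrightarrow> x + y \<in> hecke_ideal n"
  using additive_subgroup.a_closed[OF ideal.axioms(1)[OF ideal_hecke_ideal]] by fastforce
lemma hecke_ideal_neg: "x \<in> hecke_ideal n \<Longrightarrow> - x \<in> hecke_ideal n"
  using additive_subgroup.a_inv_closed[OF ideal.axioms(1)[OF ideal_hecke_ideal]] by fastforce
lemma hecke_ideal_lmult: "x \<in> hecke_ideal n \<Longrightarrow> a * x \<in> hecke_ideal n"
  using ideal.I_l_closed[OF ideal_hecke_ideal] by fastforce
lemma hecke_ideal_rmult: "x \<in> hecke_ideal n \<Longrightarrow> x * a \<in> hecke_ideal n"
  using ideal.I_r_closed[OF ideal_hecke_ideal] by fastforce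
lemma hecke_ideal_diff: "x \<in> hecke_ideal n \<Longrightarrow> y \<in> hecke_ideal n \<Longrightarrow> x - y \<in> hecke_ideal n"
  using hecke_ideal_add hecke_ideal_neg by (metis diff_conv_add_uminus)

lemma cls_eq_iff: "cls n x = cls n y \<longleftrightarrow> x - y \<in> hecke_ideal n"
proof -
  interpret I: ideal "hecke_ideal n" FA by (rule ideal_hecke_ideal)
  have "cls n x = cls n y \<longleftrightarrow> y \<in> hecke_ideal n +>\<^bsub>FA\<^esub> x"
    unfolding cls_def hecke_ideal_def[symmetric]
    by (metis I.a_rcos_self I.a_repr_independence' UNIV_I FA_simps(1))
  also have "\<dots> \<longleftrightarrow> y - x \<in> hecke_ideal n" using I.a_rcos_module_minus[of x y] ring_FA by simp
  also have "\<dots> \<longleftrightarrow> x - y \<in> hecke_ideal n" using hecke_ideal_neg by (metis minus_diff_eq)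
  finally show ?thesis .
qed

lemma Hecke_eq_Quot: "Hecke n = FA Quot (hecke_ideal n)" by (simp add: Hecke_def hecke_ideal_def)
lemma cls_eq_rcos: "cls n x = hecke_ideal n +>\<^bsub>FA\<^esub> x" by (simp add: cls_def hecke_ideal_def)

lemma cls_hom: "cls n \<in> ring_hom FA (Hecke n)"
proof -
  interpret I: ideal "hecke_ideal n" FA by (rule ideal_hecke_ideal)
  have "(+>\<^bsub>FA\<^esub>) (hecke_ideal n) \<in> ring_hom FA (FA Quot hecke_ideal n)" by (rule I.rcos_ring_hom)
  moreover have "cls n = (+>\<^bsub>FA\<^esub>) (hecke_ideal n)" by (rule ext) (simp add: cls_eq_rcos)
  ultimately show ?thesis by (simp add: Hecke_eq_Quot)
qed

lemma ring_Hecke: "ring (Hecke n)"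
proof -
  interpret I: ideal "hecke_ideal n" FA by (rule ideal_hecke_ideal)
  show ?thesis unfolding Hecke_eq_Quot by (rule I.quotient_is_ring)
qed

lemma cls_carrier [simp]: "cls n x \<in> carrier (Hecke n)"
  using ring_hom_closed[OF cls_hom] by simp

lemma carrier_Hecke: "carrier (Hecke n) = range (cls n)"
proof -
  interpret I: ideal "hecke_ideal n" FA by (rule ideal_hecke_ideal)
  show ?thesis unfolding Hecke_eq_Quot cls_eq_rcos
    by (auto simp only: FactRing_def A_RCOSETS_def RCOSETS_def a_r_coset_def partial_object.simps FA_simps image_def)
qed

lemma cls_mult: "cls n (x * y) = cls n x \<otimes>\<^bsub>Hecke n\<^esub> cls n y"
  using ring_hom_mult[OF cls_hom, of x y] by simp
lemma cls_add: "cls n (x + y) = cls n x \<oplus>\<^bsub>Hecke n\<^esub> cls n y"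
  using ring_hom_add[OF cls_hom, of x y] by simp
lemma cls_one: "cls n 1 = \<one>\<^bsub>Hecke n\<^esub>"
  using ring_hom_one[OF cls_hom] by simp
lemma cls_zero: "cls n 0 = \<zero>\<^bsub>Hecke n\<^esub>"
  using ring_hom_zero[OF cls_hom ring_FA ring_Hecke] by simp
lemma cls_neg: "cls n (- x) = \<ominus>\<^bsub>Hecke n\<^esub> cls n x"
proof -
  interpret H: ring "Hecke n" by (rule ring_Hecke)
  have "cls n (- x) \<oplus>\<^bsub>Hecke n\<^esub> cls n x = cls n (- x + x)"
    by (rule cls_add[symmetric])
  also have "\<dots> = \<zero>\<^bsub>Hecke n\<^esub>" using cls_zero[of n] by (metis add.left_inverse)
  finally show ?thesis using H.minus_equality cls_carrier by metis
qed
lemma cls_diff: "cls n (x - y) = cls n x \<ominus>\<^bsub>Hecke n\<^esub> cls n y"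
  by (simp only: diff_conv_add_uminus cls_add cls_neg a_minus_def)

section \<open>Letter actions and substitution homomorphisms\<close>

lemma poly_mapping_single_induct [case_names zero add]:
  fixes P :: "('a \<Rightarrow>\<^sub>0 'b::monoid_add) \<Rightarrow> bool"
  assumes "P 0" "\<And>f a b. P f \<Longrightarrow> P (f + Poly_Mapping.single a b)"
  shows "P p"
proof (induct p rule: update_induct)
  case const then show ?case using assms by simp
next
  case (update f a b)
  have "Poly_Mapping.update a b f = f + Poly_Mapping.single a b"
    by (rule poly_mapping_eqI) (use update(1) in \<open>auto simp: lookup_update lookup_add lookup_single in_keys_iff when_def\<close>)
  then show ?case using assms update by simp
qed

fun act_word :: "('a \<Rightarrow> 'm \<Rightarrow> 'm) \<Rightarrow> 'a word \<Rightarrow> 'm \<Rightarrow> 'm" where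
  "act_word f (Word xs) = foldr f xs"

lemma act_word_plus: "act_word f (u + w) m = act_word f u (act_word f w m)"
  by (cases u; cases w) auto

lemma act_word_zero: "act_word f 0 m = m"
  by (simp add: zero_word_def)

locale letter_rep =
  fixes s :: "laurent \<Rightarrow> 'm::ab_group_add \<Rightarrow> 'm" and f :: "gen \<Rightarrow> 'm \<Rightarrow> 'm"
  assumes f_add: "f g (x + y) = f g x + f g y"
  and s_add: "s a (x + y) = s a x + s a y"
  and s_add_left: "s (a + b) x = s a x + s b x"
  and s_mult: "s (a * b) x = s a (s b x)"
  and s_one: "s 1 x = x"
  and s_comm: "s a (f g x) = f g (s a x)"
begin

definition act :: "freealg \<Rightarrow> 'm \<Rightarrow> 'm" where
  "act p m = Sum_any (\<lambda>w. s (Poly_Mapping.lookup p w) (act_word f w m))"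

lemma s_zero_left: "s 0 x = 0" using s_add_left[of 0 0 x] by simp

lemma act_word_add: "act_word f w (x + y) = act_word f w x + act_word f w y"
proof (cases w)
  case (Word xs) then show ?thesis by (induct xs arbitrary: w) (auto simp: f_add)
qed

lemma act_word_s: "s a (act_word f w x) = act_word f w (s a x)"
proof (cases w)
  case (Word xs) then show ?thesis by (induct xs arbitrary: w) (auto simp: s_comm)
qed

lemma finite_act_support: "finite {w. s (Poly_Mapping.lookup p w) (act_word f w m) \<noteq> 0}"
  by (rule finite_subset[of _ "Poly_Mapping.keys p"]) (auto simp: in_keys_iff s_zero_left)

lemma act_add_p: "act (p + q) m = act p m + act q m"
  unfolding act_def lookup_add s_add_left by (rule Sum_any.distrib[OF finite_act_support finite_act_support])

lemma act_zero_p [simp]: "act 0 m = 0"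
  unfolding act_def by (simp add: s_zero_left)

lemma act_single: "act (Poly_Mapping.single w a) m = s a (act_word f w m)"
proof -
  have "act (Poly_Mapping.single w a) m = (\<Sum>w'\<in>{w}. s (Poly_Mapping.lookup (Poly_Mapping.single w a) w') (act_word f w' m))"
    unfolding act_def by (rule Sum_any.expand_superset) (auto simp: lookup_single when_def s_zero_left)
  then show ?thesis by simp
qed

lemma act_add_m: "act p (x + y) = act p x + act p y"
proof (induct p rule: poly_mapping_single_induct)
  case (add p a b) then show ?case
    by (simp add: act_add_p act_single act_word_add s_add algebra_simps)
qed simp

lemma act_zero_m [simp]: "act p 0 = 0" using act_add_m[of p 0 0] by simp

lemma act_diff_m: "act p (x - y) = act p x - act p y"
  using act_add_m[of p "x - y" y] by (simp add: algebra_simps)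

lemma act_mult: "act (p * q) m = act p (act q m)"
proof (induct q rule: poly_mapping_single_induct)
  case zero then show ?case by simp
next
  case (add q w b)
  have "act (p * Poly_Mapping.single w b) m = act p (act (Poly_Mapping.single w b) m)"
  proof (induct p rule: poly_mapping_single_induct)
    case zero then show ?case by simp
  next
    case (add p u a)
    then show ?case
      by (simp add: distrib_right act_add_p mult_single act_single act_word_plus s_mult act_word_s)
  qed
  with add show ?case by (simp add: distrib_left act_add_p act_add_m)
qed

lemma act_neg_p: "act (- p) m = - act p m"
  using act_add_p[of p "-p" m] by (simp add: eq_neg_iff_add_eq_0 add.commute)

lemma act_diff_p: "act (p - q) m = act p m - act q m"
  using act_add_p[of p "-q" m] by (simp add: act_neg_p)

lemma act_one: "act 1 m = m"
  using act_single[of 0 1 m] by (simp add: act_word_zero s_one)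

lemma act_letter: "act (letter g) m = f g m"
  by (simp add: letter_def act_single s_one)

lemma act_const: "act (const a) m = s a m"
  by (simp add: const_def act_single act_word_zero flip: zero_word_def)

end

lemma const_central: "const a * x = x * const a"
proof (induct x rule: poly_mapping_single_induct)
  case zero then show ?case by simp
next
  case (add f w b)
  then show ?case by (simp add: distrib_left distrib_right const_def mult_single mult.commute flip: zero_word_def)
qed

lemma const_mult: "const (a * b) = const a * const b"
  by (simp add: const_def mult_single)
lemma const_add: "const (a + b) = const a + const b"
  by (simp add: const_def single_add)
lemma const_diff: "const (a - b) = const a - const b"
  by (simp add: const_def single_diff)
lemma const_one: "const 1 = 1" by (simp add: const_def zero_word_def[symmetric])

lemma freealg_induct [case_names const letter_mult add]:
  assumes const: "\<And>a. P (const a)"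
    and letter_mult: "\<And>g x. P x \<Longrightarrow> P (letter g * x)"
    and add: "\<And>x y. P x \<Longrightarrow> P y \<Longrightarrow> P (x + y)"
  shows "P x"
proof (induct x rule: poly_mapping_single_induct)
  case zero
  show ?case using const[of 0] by (simp add: const_def)
next
  case (add x w b)
  have "P (Poly_Mapping.single (Word xs) b)" for xs
  proof (induct xs)
    case Nil then show ?case using const[of b] by (simp add: const_def)
  next
    case (Cons g xs)
    have "Poly_Mapping.single (Word (g # xs)) b = letter g * Poly_Mapping.single (Word xs) b"
      by (simp add: letter_def mult_single)
    then show ?case using letter_mult[OF Cons] by simp
  qed
  then show ?case using add.hyps by (cases w) (simp add: assms(3))
qed

lemma const_mult_left_commute: "const a * (u * v) = u * (const a * v)"
  by (metis const_central mult.assoc)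

interpretation left_mult: letter_rep "\<lambda>a x. const a * x" "\<lambda>g x. F g * x" for F :: "gen \<Rightarrow> freealg"
  by unfold_locales
    (simp_all add: distrib_left distrib_right const_add const_mult const_one mult.assoc,
     rule const_mult_left_commute)

definition subst_hom :: "(gen \<Rightarrow> freealg) \<Rightarrow> freealg \<Rightarrow> freealg" where
  "subst_hom F p = left_mult.act F p 1"

lemma act_word_left_mult: "act_word (\<lambda>g x. (F g :: freealg) * x) w y = act_word (\<lambda>g x. F g * x) w 1 * y"
proof (cases w)
  case (Word xs) then show ?thesis by (induct xs arbitrary: w) (auto simp: mult.assoc)
qed

lemma left_mult_act: "left_mult.act F p y = subst_hom F p * y"
proof (induct p rule: poly_mapping_single_induct)
  case zero then show ?case by (simp add: subst_hom_def)
next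
  case (add p w b)
  then show ?case unfolding subst_hom_def
    by (simp only: left_mult.act_add_p left_mult.act_single act_word_left_mult[of F w y]
        distrib_right mult.assoc)
qed

lemma subst_hom_mult: "subst_hom F (p * q) = subst_hom F p * subst_hom F q"
  unfolding subst_hom_def left_mult.act_mult by (simp add: left_mult_act)

lemma subst_hom_add: "subst_hom F (p + q) = subst_hom F p + subst_hom F q"
  unfolding subst_hom_def left_mult.act_add_p ..

lemma subst_hom_diff: "subst_hom F (p - q) = subst_hom F p - subst_hom F q"
  unfolding subst_hom_def left_mult.act_diff_p ..

lemma subst_hom_neg: "subst_hom F (- p) = - subst_hom F p"
  unfolding subst_hom_def left_mult.act_neg_p ..

lemma subst_hom_one: "subst_hom F 1 = 1"
  unfolding subst_hom_def left_mult.act_one ..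

lemma subst_hom_letter: "subst_hom F (letter g) = F g"
  unfolding subst_hom_def left_mult.act_letter by simp

lemma subst_hom_const: "subst_hom F (const a) = const a"
  unfolding subst_hom_def left_mult.act_const by simp

section \<open>Rings satisfying the Hecke relations\<close>

lemma vv_vinv: "vv * vinv = 1"
  by (simp add: vv_def vinv_def mult_single)

lemma hecke_quadratic_expand: "(x - const vv) * (x + const vinv) = x * x - (const (vv - vinv) * x + 1)"
proof -
  have c1: "x * const vinv = const vinv * x" by (rule const_central[symmetric])
  have c2: "const vv * const vinv = 1" by (simp only: const_mult[symmetric] vv_vinv const_one)
  show ?thesis
    by (simp only: ring_distribs const_diff c1 c2 left_diff_distrib) (simp add: algebra_simps)
qed

lemma not_adjacent_mod:
  fixes d n :: int
  assumes "2 \<le> d \<and> d \<le> n - 2 \<or> 2 \<le> - d \<and> - d \<le> n - 2"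
  shows "\<not> [d = 1] (mod n) \<and> \<not> [d = - 1] (mod n)"
proof -
  have nd: "\<not> n dvd x" if "0 < x \<and> x < n \<or> 0 < - x \<and> - x < n" for x
    using that zdvd_not_zless[of x n] zdvd_not_zless[of "-x" n] by auto
  have "\<not> (n dvd d - 1)" "\<not> (n dvd d + 1)"
    using nd[of "d - 1"] nd[of "d + 1"] assms by auto
  then show ?thesis by (simp add: cong_iff_dvd_diff cong_sym_eq)
qed

text \<open>The quadratic relation is stated as \<open>T\<^sup>2 = (v - v\<^sup>-\<^sup>1) T + 1\<close>, with the central
  parameter \<open>cc\<close> standing for \<open>v - v\<^sup>-\<^sup>1\<close>.\<close>

locale hecke_rels = ring R for R (structure) +
  fixes N :: nat and t :: "int \<Rightarrow> 'a" and rh rhi cc :: 'a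
  assumes N_gt_2: "N > 2"
  and tC [simp]: "t i \<in> carrier R" and rhC [simp]: "rh \<in> carrier R"
  and rhiC [simp]: "rhi \<in> carrier R" and ccC [simp]: "cc \<in> carrier R"
  and t_cong: "i mod int N = j mod int N \<Longrightarrow> t i = t j"
  and quadratic: "t i \<otimes> t i = cc \<otimes> t i \<oplus> \<one>"
  and braid: "t i \<otimes> t (i + 1) \<otimes> t i = t (i + 1) \<otimes> t i \<otimes> t (i + 1)"
  and commute: "\<not> [i - j = 1] (mod int N) \<Longrightarrow> \<not> [i - j = - 1] (mod int N) \<Longrightarrow> t i \<otimes> t j = t j \<otimes> t i"
  and rho_t: "rh \<otimes> t i = t (i + 1) \<otimes> rh"
  and rho_rhoinv: "rh \<otimes> rhi = \<one>" and rhoinv_rho: "rhi \<otimes> rh = \<one>"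
  and cc_central: "x \<in> carrier R \<Longrightarrow> cc \<otimes> x = x \<otimes> cc"

lemma cls_eq_of_rel: "x - y \<in> rels n \<Longrightarrow> cls n x = cls n y"
  using hecke_ideal_rel cls_eq_iff by blast

lemma hecke_rels_Hecke:
  assumes "n > 2"
  shows "hecke_rels (Hecke n) n (gT n) (gRho n) (gRhoInv n) (scal n (vv - vinv))"
proof (rule hecke_rels.intro[OF ring_Hecke], unfold_locales)
  fix i j :: int assume "i mod int n = j mod int n"
  moreover have "gT n k = gT n (k mod int n)" for k
    unfolding gT_def by (rule cls_eq_of_rel) (auto simp: rels_def)
  ultimately show "gT n i = gT n j" by metis
next
  fix i :: int
  let ?t = "letter (T i)"
  have "(?t - const vv) * (?t + const vinv) \<in> rels n" by (auto simp: rels_def)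
  then have "cls n (?t * ?t) = cls n (const (vv - vinv) * ?t + 1)"
    by (intro cls_eq_of_rel) (simp add: hecke_quadratic_expand)
  then show "gT n i \<otimes>\<^bsub>Hecke n\<^esub> gT n i = scal n (vv - vinv) \<otimes>\<^bsub>Hecke n\<^esub> gT n i \<oplus>\<^bsub>Hecke n\<^esub> \<one>\<^bsub>Hecke n\<^esub>"
    by (simp add: gT_def scal_def cls_mult cls_add cls_one)
next
  fix i j :: int assume "\<not> [i - j = 1] (mod int n)" "\<not> [i - j = - 1] (mod int n)"
  then have "cls n (letter (T i) * letter (T j)) = cls n (letter (T j) * letter (T i))"
    by (intro cls_eq_of_rel) (unfold rels_def, blast)
  then show "gT n i \<otimes>\<^bsub>Hecke n\<^esub> gT n j = gT n j \<otimes>\<^bsub>Hecke n\<^esub> gT n i"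
    by (simp add: gT_def cls_mult)
next
  fix x assume "x \<in> carrier (Hecke n)"
  then show "scal n (vv - vinv) \<otimes>\<^bsub>Hecke n\<^esub> x = x \<otimes>\<^bsub>Hecke n\<^esub> scal n (vv - vinv)"
    by (auto simp: carrier_Hecke scal_def const_central simp flip: cls_mult)
qed (use assms in \<open>auto simp: gT_def gRho_def gRhoInv_def scal_def rels_def intro!: cls_eq_of_rel simp flip: cls_mult cls_one\<close>)

context hecke_rels begin

definition tinv :: "int \<Rightarrow> 'a" where "tinv i = t i \<ominus> cc"

lemma tinvC [simp]: "tinv i \<in> carrier R" by (simp add: tinv_def)

lemma t_tinv: "t i \<otimes> tinv i = \<one>"
proof -
  have "t i \<otimes> tinv i = t i \<otimes> t i \<oplus> \<ominus> (cc \<otimes> t i)" by (simp add: tinv_def a_minus_def r_distr r_minus cc_central)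
  also have "\<dots> = \<one>" by (simp add: quadratic a_ac r_neg2 r_neg)
  finally show ?thesis .
qed

lemma tinv_t: "tinv i \<otimes> t i = \<one>"
proof -
  have "tinv i \<otimes> t i = t i \<otimes> t i \<oplus> \<ominus> (cc \<otimes> t i)" by (simp add: tinv_def a_minus_def l_distr l_minus)
  also have "\<dots> = \<one>" by (simp add: quadratic a_ac r_neg2 r_neg)
  finally show ?thesis .
qed

lemma m_assoc_subst: "x \<otimes> y = w \<Longrightarrow> x \<in> carrier R \<Longrightarrow> y \<in> carrier R \<Longrightarrow> z \<in> carrier R \<Longrightarrow> x \<otimes> (y \<otimes> z) = w \<otimes> z"
  by (simp flip: m_assoc)

text \<open>Primed variants act on a right cofactor \<open>z\<close>, for rewriting right-nested products.\<close>

lemma t_tinv': "z \<in> carrier R \<Longrightarrow> t i \<otimes> (tinv i \<otimes> z) = z" by (simp add: m_assoc_subst[OF t_tinv])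
lemma tinv_t': "z \<in> carrier R \<Longrightarrow> tinv i \<otimes> (t i \<otimes> z) = z" by (simp add: m_assoc_subst[OF tinv_t])
lemma rho_rhoinv': "z \<in> carrier R \<Longrightarrow> rh \<otimes> (rhi \<otimes> z) = z" by (simp add: m_assoc_subst[OF rho_rhoinv])
lemma rhoinv_rho': "z \<in> carrier R \<Longrightarrow> rhi \<otimes> (rh \<otimes> z) = z" by (simp add: m_assoc_subst[OF rhoinv_rho])
lemma quadratic': "z \<in> carrier R \<Longrightarrow> t i \<otimes> (t i \<otimes> z) = cc \<otimes> (t i \<otimes> z) \<oplus> z"
  by (simp add: m_assoc_subst[OF quadratic] l_distr m_assoc)
lemma cc_left_commute: "x \<in> carrier R \<Longrightarrow> z \<in> carrier R \<Longrightarrow> x \<otimes> (cc \<otimes> z) = cc \<otimes> (x \<otimes> z)"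
  by (metis ccC cc_central m_assoc)

lemma braid': "z \<in> carrier R \<Longrightarrow> t i \<otimes> (t (i + 1) \<otimes> (t i \<otimes> z)) = t (i + 1) \<otimes> (t i \<otimes> (t (i + 1) \<otimes> z))"
  using m_assoc_subst[OF braid[of i]] by (simp add: m_assoc)
lemma rho_t': "z \<in> carrier R \<Longrightarrow> rh \<otimes> (t i \<otimes> z) = t (i + 1) \<otimes> (rh \<otimes> z)"
  by (simp add: m_assoc_subst[OF rho_t] m_assoc)

lemma rho_tinv: "rh \<otimes> tinv i = tinv (i + 1) \<otimes> rh"
  by (simp add: tinv_def a_minus_def r_distr l_distr rho_t r_minus l_minus cc_central)

lemma t_commute_far:
  "2 \<le> x - y \<and> x - y \<le> int N - 2 \<or> 2 \<le> y - x \<and> y - x \<le> int N - 2 \<Longrightarrow> t x \<otimes> t y = t y \<otimes> t x"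
  using not_adjacent_mod[of "x - y" "int N"] commute by auto

lemma t_commute_far':
  assumes "2 \<le> x - y \<and> x - y \<le> int N - 2 \<or> 2 \<le> y - x \<and> y - x \<le> int N - 2" "z \<in> carrier R"
  shows "t x \<otimes> (t y \<otimes> z) = t y \<otimes> (t x \<otimes> z)"
  using t_commute_far[OF assms(1)] assms(2) by (simp flip: m_assoc)

lemma tinv_commute: "t x \<otimes> t y = t y \<otimes> t x \<Longrightarrow> tinv x \<otimes> t y = t y \<otimes> tinv x"
  by (simp add: tinv_def a_minus_def r_distr l_distr r_minus l_minus cc_central)
lemma t_commute_tinv: "t x \<otimes> t y = t y \<otimes> t x \<Longrightarrow> t x \<otimes> tinv y = tinv y \<otimes> t x"
  by (simp add: tinv_def a_minus_def r_distr l_distr r_minus l_minus cc_central)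

end

section \<open>The images of the generators\<close>

locale phi_images = hecke_rels +
  fixes r :: nat and im :: int
  assumes N_eq: "N = r + 1" and r_gt_2: "r > 2"
begin

definition conjT :: 'a where "conjT = t im \<otimes> t (im + 1) \<otimes> tinv im"

text \<open>Indices of \<open>phiT\<close> are read modulo \<open>r\<close> and those of \<open>t\<close> modulo \<open>r + 1\<close>: for
  \<open>u = (i - im) mod r \<noteq> 0\<close> the image \<open>t (u + im + 1)\<close> is \<open>t i\<close> when \<open>1 \<le> i < im\<close> and
  \<open>t (i + 1)\<close> when \<open>im < i \<le> r\<close>.\<close>

definition phiT :: "int \<Rightarrow> 'a" where
  "phiT i = (if (i - im) mod int r = 0 then conjT else t ((i - im) mod int r + im + 1))"
definition phiR :: 'a where "phiR = tinv (im + 1) \<otimes> rh"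
definition phiRi :: 'a where "phiRi = rhi \<otimes> t (im + 1)"

lemma conjT_carrier [simp]: "conjT \<in> carrier R" by (simp add: conjT_def)
lemma phiT_carrier [simp]: "phiT i \<in> carrier R" by (simp add: phiT_def)

lemma conjT_alt: "conjT = tinv (im + 1) \<otimes> t im \<otimes> t (im + 1)"
proof -
  have br: "t im \<otimes> (t (im + 1) \<otimes> (t im \<otimes> z)) = t (im + 1) \<otimes> (t im \<otimes> (t (im + 1) \<otimes> z))"
    if "z \<in> carrier R" for z using braid'[OF that, of im] by simp
  have "conjT = tinv (im + 1) \<otimes> (t (im + 1) \<otimes> conjT)" by (simp add: tinv_t')
  also have "\<dots> = tinv (im + 1) \<otimes> (t (im + 1) \<otimes> (t im \<otimes> (t (im + 1) \<otimes> tinv im)))" by (simp add: conjT_def m_assoc)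
  also have "\<dots> = tinv (im + 1) \<otimes> (t im \<otimes> (t (im + 1) \<otimes> (t im \<otimes> tinv im)))" by (simp add: br)
  also have "\<dots> = tinv (im + 1) \<otimes> t im \<otimes> t (im + 1)" by (simp add: t_tinv m_assoc)
  finally show ?thesis .
qed

lemma phiT_quadratic: "phiT i \<otimes> phiT i = cc \<otimes> phiT i \<oplus> \<one>"
proof (cases "(i - im) mod int r = 0")
  case True
  then show ?thesis
    by (simp add: phiT_def conjT_def m_assoc tinv_t' quadratic' r_distr cc_left_commute t_tinv)
next
  case False
  then show ?thesis by (simp add: phiT_def quadratic)
qed

lemma N_ge_4: "int N \<ge> 4" using N_eq r_gt_2 by simp

lemma mod_succ_offset: "(i + 1 - im) mod int r = (if (i - im) mod int r = int r - 1 then 0 else (i - im) mod int r + 1)"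
proof -
  have "(i + 1 - im) mod int r = ((i - im) + 1) mod int r" by (simp add: algebra_simps)
  also have "\<dots> = ((i - im) mod int r + 1) mod int r" by (simp add: mod_add_left_eq)
  finally have "(i + 1 - im) mod int r = ((i - im) mod int r + 1) mod int r" .
  moreover have "0 \<le> (i - im) mod int r" "(i - im) mod int r < int r" using r_gt_2 by auto
  ultimately show ?thesis by (auto simp: mod_pos_pos_trivial)
qed

lemma phiT_braid: "phiT i \<otimes> phiT (i + 1) \<otimes> phiT i = phiT (i + 1) \<otimes> phiT i \<otimes> phiT (i + 1)"
proof -
  define u where "u = (i - im) mod int r"
  have u0: "0 \<le> u" "u < int r" using r_gt_2 by (auto simp: u_def)
  have su: "(i + 1 - im) mod int r = (if u = int r - 1 then 0 else u + 1)" using mod_succ_offset u_def by simp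
  consider "u = 0" | "u = int r - 1" | "1 \<le> u \<and> u \<le> int r - 2" using u0 r_gt_2 by linarith
  then show ?thesis
  proof cases
    case 1
    txt \<open>\<open>t im\<close> commutes with \<open>t (im + 2)\<close>, so conjugating by it reduces the claim to the
      braid relation of \<open>t (im + 1)\<close> and \<open>t (im + 2)\<close>.\<close>
    let ?a = "t im" and ?b = "t (im + 1)" and ?d = "t (im + 2)"
    have e: "phiT i = conjT" "phiT (i + 1) = ?d" using 1 su r_gt_2 by (simp_all add: phiT_def u_def[symmetric] add_ac)
    have ad: "?d \<otimes> ?a = ?a \<otimes> ?d" by (rule t_commute_far) (use N_ge_4 in simp)
    have ad': "?d \<otimes> (?a \<otimes> z) = ?a \<otimes> (?d \<otimes> z)" if "z \<in> carrier R" for z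
      using ad that by (simp flip: m_assoc)
    have aid: "tinv im \<otimes> ?d = ?d \<otimes> tinv im" by (rule tinv_commute) (simp add: ad)
    have aid': "tinv im \<otimes> (?d \<otimes> z) = ?d \<otimes> (tinv im \<otimes> z)" if "z \<in> carrier R" for z
      using aid that by (simp flip: m_assoc)
    have bdb: "?b \<otimes> (?d \<otimes> (?b \<otimes> z)) = ?d \<otimes> (?b \<otimes> (?d \<otimes> z))" if "z \<in> carrier R" for z
      using braid'[OF that, of "im + 1"] by (simp add: add.assoc)
    show ?thesis unfolding e conjT_def
      by (simp add: m_assoc aid' aid tinv_t' bdb ad')
  next
    case 2
    txt \<open>Dually, write \<open>conjT\<close> as a conjugate of \<open>t im\<close> by \<open>tinv (im + 1)\<close>, which commutes
      with \<open>t (im - 1)\<close>.\<close>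
    let ?a = "t im" and ?b = "t (im + 1)" and ?c = "t (im - 1)"
    have tc: "t (int r - 1 + im + 1) = ?c"
    proof (rule t_cong)
      have "int r - 1 + im + 1 = (im - 1) + int N" using N_eq by simp
      then show "(int r - 1 + im + 1) mod int N = (im - 1) mod int N" by (simp only: mod_add_self2)
    qed
    have e: "phiT i = ?c" "phiT (i + 1) = conjT" using 2 su r_gt_2 tc by (simp_all add: phiT_def u_def[symmetric])
    have bc: "?b \<otimes> ?c = ?c \<otimes> ?b" by (rule t_commute_far) (use N_ge_4 in simp)
    have bc': "?b \<otimes> (?c \<otimes> z) = ?c \<otimes> (?b \<otimes> z)" if "z \<in> carrier R" for z
      using bc that by (simp flip: m_assoc)
    have cbi: "?c \<otimes> tinv (im + 1) = tinv (im + 1) \<otimes> ?c" by (rule t_commute_tinv) (simp add: bc)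
    have cbi': "?c \<otimes> (tinv (im + 1) \<otimes> z) = tinv (im + 1) \<otimes> (?c \<otimes> z)" if "z \<in> carrier R" for z
      using cbi that by (simp flip: m_assoc)
    have cac: "?c \<otimes> (?a \<otimes> (?c \<otimes> z)) = ?a \<otimes> (?c \<otimes> (?a \<otimes> z))" if "z \<in> carrier R" for z
      using braid'[OF that, of "im - 1"] by simp
    show ?thesis unfolding e conjT_alt
      by (simp add: m_assoc cbi' bc bc' cac t_tinv')
  next
    case 3
    have e: "phiT i = t (u + im + 1)" "phiT (i + 1) = t (u + im + 1 + 1)" using 3 su r_gt_2
      by (simp_all add: phiT_def u_def[symmetric] add_ac)
    show ?thesis unfolding e by (rule braid)
  qed
qed

lemma conjT_commute: "2 \<le> w \<Longrightarrow> w \<le> int r - 2 \<Longrightarrow> conjT \<otimes> t (w + im + 1) = t (w + im + 1) \<otimes> conjT"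
proof -
  assume w: "2 \<le> w" "w \<le> int r - 2"
  let ?e = "t (w + im + 1)"
  have ea: "t im \<otimes> ?e = ?e \<otimes> t im" by (rule t_commute_far) (use w N_eq in simp)
  have eb: "t (im + 1) \<otimes> ?e = ?e \<otimes> t (im + 1)" by (rule t_commute_far) (use w N_eq in simp)
  have eai: "tinv im \<otimes> ?e = ?e \<otimes> tinv im" by (rule tinv_commute) (simp add: ea)
  have "conjT \<otimes> ?e = t im \<otimes> t (im + 1) \<otimes> (tinv im \<otimes> ?e)" by (simp add: conjT_def m_assoc)
  also have "\<dots> = t im \<otimes> (t (im + 1) \<otimes> ?e) \<otimes> tinv im" by (simp add: eai m_assoc)
  also have "\<dots> = (t im \<otimes> ?e) \<otimes> t (im + 1) \<otimes> tinv im" by (simp add: eb m_assoc)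
  also have "\<dots> = ?e \<otimes> conjT" by (simp add: ea conjT_def m_assoc)
  finally show ?thesis .
qed

lemma phiT_commute_conjT: "(i - im) mod int r = 0 \<Longrightarrow> \<not> [i - j = 1] (mod int r) \<Longrightarrow> \<not> [i - j = - 1] (mod int r) \<Longrightarrow>
   phiT i \<otimes> phiT j = phiT j \<otimes> phiT i"
proof -
  assume u1: "(i - im) mod int r = 0" and h1: "\<not> [i - j = 1] (mod int r)" and h2: "\<not> [i - j = - 1] (mod int r)"
  define u2 where "u2 = (j - im) mod int r"
  have u20: "0 \<le> u2" "u2 < int r" using r_gt_2 by (auto simp: u2_def)
  have md: "(i - j) mod int r = (0 - u2) mod int r"
    by (metis u1 u2_def mod_diff_eq diff_diff_eq2 diff_diff_cancel diff_add_cancel)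
  show ?thesis
  proof (cases "u2 = 0")
    case True then show ?thesis using u1 by (simp add: phiT_def u2_def)
  next
    case False
    have "u2 \<noteq> 1"
    proof
      assume "u2 = 1" then have "[i - j = - 1] (mod int r)" by (simp add: cong_def md)
      with h2 show False ..
    qed
    moreover have "u2 \<noteq> int r - 1"
    proof
      assume "u2 = int r - 1"
      then have "(i - j) mod int r = (1 - int r) mod int r" by (simp add: md)
      also have "\<dots> = 1 mod int r" by (metis add.commute diff_add_cancel mod_add_self2)
      finally have "[i - j = 1] (mod int r)" by (simp add: cong_def)
      with h1 show False ..
    qed
    ultimately have w: "2 \<le> u2" "u2 \<le> int r - 2" using False u20 by auto
    have e: "phiT i = conjT" "phiT j = t (u2 + im + 1)" using u1 False by (simp_all add: phiT_def u2_def)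
    show ?thesis unfolding e by (rule conjT_commute[OF w])
  qed
qed

lemma phiT_commute: "\<not> [i - j = 1] (mod int r) \<Longrightarrow> \<not> [i - j = - 1] (mod int r) \<Longrightarrow>
   phiT i \<otimes> phiT j = phiT j \<otimes> phiT i"
proof -
  assume h1: "\<not> [i - j = 1] (mod int r)" and h2: "\<not> [i - j = - 1] (mod int r)"
  have h1': "\<not> [j - i = - 1] (mod int r)" using h1
    by (metis cong_minus_minus_iff minus_diff_eq minus_minus)
  have h2': "\<not> [j - i = 1] (mod int r)" using h2
    by (metis cong_minus_minus_iff minus_diff_eq)
  define u1 where "u1 = (i - im) mod int r"
  define u2 where "u2 = (j - im) mod int r"
  show ?thesis
  proof (cases "u1 = 0 \<or> u2 = 0")
    case True
    then show ?thesis using phiT_commute_conjT[OF _ h1 h2] phiT_commute_conjT[OF _ h2' h1'] u1_def u2_def by metis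
  next
    case False
    have u0: "0 \<le> u1" "u1 < int r" "0 \<le> u2" "u2 < int r" using r_gt_2 by (auto simp: u1_def u2_def)
    have md: "(i - j) mod int r = (u1 - u2) mod int r"
      unfolding u1_def u2_def by (simp add: mod_diff_eq)
    show ?thesis
    proof (cases "u1 = u2")
      case True then show ?thesis by (simp add: phiT_def u1_def[symmetric] u2_def[symmetric])
    next
      case ne: False
      have "u1 - u2 \<noteq> 1" using h1 md by (auto simp: cong_def)
      moreover have "u1 - u2 \<noteq> - 1" using h2 md by (auto simp: cong_def)
      ultimately have rng: "2 \<le> (u1 + im + 1) - (u2 + im + 1) \<and> (u1 + im + 1) - (u2 + im + 1) \<le> int N - 2 \<or>
          2 \<le> (u2 + im + 1) - (u1 + im + 1) \<and> (u2 + im + 1) - (u1 + im + 1) \<le> int N - 2"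
        using ne u0 False N_eq by auto
      have e: "phiT i = t (u1 + im + 1)" "phiT j = t (u2 + im + 1)" using False
        by (simp_all add: phiT_def u1_def u2_def)
      show ?thesis unfolding e by (rule t_commute_far[OF rng])
    qed
  qed
qed

lemma phiR_phiT: "phiR \<otimes> phiT i = phiT (i + 1) \<otimes> phiR"
proof -
  define u where "u = (i - im) mod int r"
  have u0: "0 \<le> u" "u < int r" using r_gt_2 by (auto simp: u_def)
  have su: "(i + 1 - im) mod int r = (if u = int r - 1 then 0 else u + 1)" using mod_succ_offset u_def by simp
  consider "u = 0" | "u = int r - 1" | "1 \<le> u \<and> u \<le> int r - 2" using u0 r_gt_2 by linarith
  then show ?thesis
  proof cases
    case 1
    have e: "phiT i = conjT" "phiT (i + 1) = t (im + 2)" using 1 su r_gt_2 by (simp_all add: phiT_def u_def[symmetric] add_ac)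
    have r1: "rh \<otimes> (t im \<otimes> z) = t (im + 1) \<otimes> (rh \<otimes> z)" if "z \<in> carrier R" for z using rho_t'[OF that] .
    have r2': "rh \<otimes> (t (im + 1) \<otimes> z) = t (im + 2) \<otimes> (rh \<otimes> z)" if "z \<in> carrier R" for z
      using rho_t'[OF that, of "im + 1"] by (simp add: add.assoc)
    have r3: "rh \<otimes> tinv im = tinv (im + 1) \<otimes> rh" by (rule rho_tinv)
    show ?thesis unfolding e conjT_def phiR_def
      by (simp add: m_assoc r1 r2' r3 tinv_t')
  next
    case 2
    have tc: "t (int r - 1 + im + 1) = t (im - 1)"
    proof (rule t_cong)
      have "int r - 1 + im + 1 = (im - 1) + int N" using N_eq by simp
      then show "(int r - 1 + im + 1) mod int N = (im - 1) mod int N" by (simp only: mod_add_self2)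
    qed
    have e: "phiT i = t (im - 1)" "phiT (i + 1) = conjT" using 2 su r_gt_2 tc by (simp_all add: phiT_def u_def[symmetric])
    have r1: "rh \<otimes> t (im - 1) = t im \<otimes> rh" using rho_t[of "im - 1"] by simp
    show ?thesis unfolding e conjT_alt phiR_def
      by (simp add: m_assoc r1 t_tinv')
  next
    case 3
    have e: "phiT i = t (u + im + 1)" "phiT (i + 1) = t (u + im + 2)" using 3 su r_gt_2
      by (simp_all add: phiT_def u_def[symmetric] add_ac)
    have r1: "rh \<otimes> t (u + im + 1) = t (u + im + 2) \<otimes> rh" using rho_t[of "u + im + 1"] by (simp add: add.assoc)
    have cb: "t (im + 1) \<otimes> t (u + im + 2) = t (u + im + 2) \<otimes> t (im + 1)"
      by (rule t_commute_far) (use 3 N_eq in simp)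
    have cbi: "tinv (im + 1) \<otimes> t (u + im + 2) = t (u + im + 2) \<otimes> tinv (im + 1)" by (rule tinv_commute[OF cb])
    have "phiR \<otimes> phiT i = tinv (im + 1) \<otimes> (rh \<otimes> t (u + im + 1))" by (simp add: e phiR_def m_assoc)
    also have "\<dots> = (tinv (im + 1) \<otimes> t (u + im + 2)) \<otimes> rh" by (simp add: r1 m_assoc)
    also have "\<dots> = phiT (i + 1) \<otimes> phiR" by (simp add: cbi e phiR_def m_assoc)
    finally show ?thesis .
  qed
qed

lemma phiR_phiRi: "phiR \<otimes> phiRi = \<one>" "phiRi \<otimes> phiR = \<one>"
  by (simp_all add: phiR_def phiRi_def m_assoc rho_rhoinv' rhoinv_rho' tinv_t t_tinv t_tinv' rho_rhoinv rhoinv_rho)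

end

definition cparam :: freealg where "cparam = const (vv - vinv)"
definition tletter :: "int \<Rightarrow> freealg" where "tletter i = letter (T i)"
definition tinv_letter :: "int \<Rightarrow> freealg" where "tinv_letter i = tletter i - cparam"

definition phi_letter :: "nat \<Rightarrow> int \<Rightarrow> gen \<Rightarrow> freealg" where
  "phi_letter r im g = (case g of
      T i \<Rightarrow> (if (i - im) mod int r = 0 then tletter im * tletter (im + 1) * tinv_letter im else tletter ((i - im) mod int r + im + 1))
    | Rho \<Rightarrow> tinv_letter (im + 1) * letter Rho
    | RhoInv \<Rightarrow> letter RhoInv * tletter (im + 1))"

lemma phi_images_Hecke:
  assumes "r > 2"
  shows "phi_images (Hecke (r + 1)) (r + 1) (gT (r + 1)) (gRho (r + 1)) (gRhoInv (r + 1))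
    (scal (r + 1) (vv - vinv)) r"
  by (rule phi_images.intro, rule hecke_rels_Hecke) (use assms in \<open>simp_all add: phi_images_axioms_def\<close>)

lemma subst_hom_ideal_subset:
  assumes "\<And>x. x \<in> rels r \<Longrightarrow> subst_hom F x \<in> hecke_ideal s"
  shows "subst_hom F ` hecke_ideal r \<subseteq> hecke_ideal s"
proof -
  have "ideal {p. subst_hom F p \<in> hecke_ideal s} FA"
    by (rule ideal_FA_I) (auto simp: subst_hom_add subst_hom_neg subst_hom_mult hecke_ideal_add hecke_ideal_neg
        hecke_ideal_lmult hecke_ideal_rmult hecke_ideal_zero simp flip: subst_hom_def,
        metis hecke_ideal_zero diff_self subst_hom_diff)
  then have "hecke_ideal r \<subseteq> {p. subst_hom F p \<in> hecke_ideal s}"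
    by (rule hecke_ideal_minimal) (use assms in blast)
  then show ?thesis by blast
qed

lemma subst_phi_ideal:
  assumes "r > 2"
  shows "subst_hom (phi_letter r im) ` hecke_ideal r \<subseteq> hecke_ideal (r + 1)"
proof -
  define N where "N = r + 1"
  let ?F = "phi_letter r im"
  interpret P: phi_images "Hecke N" N "gT N" "gRho N" "gRhoInv N" "scal N (vv - vinv)" r im
    unfolding N_def by (rule phi_images_Hecke[OF assms])
  have ctinv: "cls N (tinv_letter i) = P.tinv i" for i
    unfolding P.tinv_def by (simp add: tinv_letter_def tletter_def cparam_def cls_diff gT_def scal_def)
  have cT: "cls N (subst_hom ?F (letter (T i))) = P.phiT i" for i
    by (simp add: subst_hom_letter phi_letter_def P.phiT_def P.conjT_def cls_mult ctinv tletter_def flip: gT_def)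
  have cR: "cls N (subst_hom ?F (letter Rho)) = P.phiR"
    unfolding P.phiR_def by (simp add: subst_hom_letter phi_letter_def cls_mult ctinv gRho_def)
  have cRi: "cls N (subst_hom ?F (letter RhoInv)) = P.phiRi"
    unfolding P.phiRi_def by (simp add: subst_hom_letter phi_letter_def cls_mult tletter_def gRhoInv_def gT_def)
  have diff: "subst_hom ?F (a - b) \<in> hecke_ideal N"
    if "cls N (subst_hom ?F a) = cls N (subst_hom ?F b)" for a b
    using that by (simp add: cls_eq_iff subst_hom_diff)
  note simps = subst_hom_mult subst_hom_add subst_hom_one subst_hom_const cls_mult cls_add cls_one cT cR cRi
  have "subst_hom ?F x \<in> hecke_ideal N" if "x \<in> rels r" for x
    using that
  proof (cases rule: rels_cases)
    case (mod i)
    have "phi_letter r im (T i) = phi_letter r im (T (i mod int r))"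
      by (simp add: phi_letter_def mod_diff_left_eq)
    then show ?thesis by (simp add: mod subst_hom_diff subst_hom_letter hecke_ideal_zero)
  next
    case (quadratic i)
    show ?thesis unfolding quadratic hecke_quadratic_expand
      by (rule diff) (simp add: simps P.phiT_quadratic flip: scal_def)
  next
    case (braid i)
    show ?thesis unfolding braid by (rule diff) (simp add: simps P.phiT_braid)
  next
    case (commute i j)
    show ?thesis unfolding commute(1) by (rule diff) (simp add: simps P.phiT_commute[OF commute(2,3)])
  next
    case (rho i)
    show ?thesis unfolding rho by (rule diff) (simp add: simps P.phiR_phiT)
  next
    case rho_rhoinv
    show ?thesis unfolding rho_rhoinv by (rule diff) (simp add: simps P.phiR_phiRi)
  next
    case rhoinv_rho
    show ?thesis unfolding rhoinv_rho by (rule diff) (simp add: simps P.phiR_phiRi)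
  qed
  then show ?thesis unfolding N_def by (rule subst_hom_ideal_subset)
qed

section \<open>A module of sequences\<close>

text \<open>Here \<open>R\<close> plays the role of \<open>H\<^sup>e\<^sub>N\<close>, and \<open>gen_op c\<close> is the action on sequences
  \<open>\<int> \<Rightarrow> R\<close> of the generator \<open>T\<^sub>c\<^sub>+\<^sub>i\<^sub>m\<^sub>+\<^sub>1\<close> of \<open>H\<^sup>e\<^sub>N\<^sub>+\<^sub>1\<close>.\<close>

locale seq_module = hecke_rels +
  fixes im :: int
begin

definition local_op :: "int \<Rightarrow> 'a \<Rightarrow> 'a \<Rightarrow> 'a \<Rightarrow> 'a" where
  "local_op j x y z = (if j = int N then cc \<otimes> y \<oplus> rhi \<otimes> x else if j = 0 then rh \<otimes> z else t (j + im) \<otimes> y)"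

definition gen_op :: "int \<Rightarrow> (int \<Rightarrow> 'a) \<Rightarrow> int \<Rightarrow> 'a" where
  "gen_op c m k = local_op ((c - k) mod int (N + 1)) (m (k - 1)) (m k) (m (k + 1))"

definition carrier_seq :: "(int \<Rightarrow> 'a) \<Rightarrow> bool" where "carrier_seq m \<longleftrightarrow> (\<forall>k. m k \<in> carrier R)"

lemma carrier_seqD [simp]: "carrier_seq m \<Longrightarrow> m k \<in> carrier R" by (simp add: carrier_seq_def)
lemma local_op_carrier [simp]: "x \<in> carrier R \<Longrightarrow> y \<in> carrier R \<Longrightarrow> z \<in> carrier R \<Longrightarrow> local_op j x y z \<in> carrier R"
  by (simp add: local_op_def)
lemma gen_op_carrier [simp]: "carrier_seq m \<Longrightarrow> gen_op c m k \<in> carrier R" by (simp add: gen_op_def)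

lemma gen_op_shift: "gen_op c m (x + k) = gen_op (c - k) (\<lambda>y. m (y + k)) x"
  by (simp add: gen_op_def algebra_simps)

lemma gen_op_mod: "gen_op (c mod int (N + 1)) = gen_op c"
  by (rule ext)+ (simp add: gen_op_def mod_diff_left_eq)

lemma gen_op_shift_fun: "(\<lambda>y. gen_op c m (y + k)) = gen_op (c - k) (\<lambda>y. m (y + k))"
  by (rule ext) (rule gen_op_shift)

lemma t_rhoinv: "t x \<otimes> rhi = rhi \<otimes> t (x + 1)"
proof -
  have "t x \<otimes> rhi = rhi \<otimes> (rh \<otimes> t x) \<otimes> rhi" by (simp add: m_assoc rhoinv_rho')
  also have "\<dots> = rhi \<otimes> t (x + 1) \<otimes> (rh \<otimes> rhi)" by (simp add: rho_t m_assoc)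
  finally show ?thesis by (simp add: rho_rhoinv)
qed
lemma t_rhoinv': "z \<in> carrier R \<Longrightarrow> t x \<otimes> (rhi \<otimes> z) = rhi \<otimes> (t (x + 1) \<otimes> z)"
  by (simp add: m_assoc_subst[OF t_rhoinv] m_assoc)

lemma N_ge_3: "int N \<ge> 3" using N_gt_2 by simp

lemma mod_N1_id: "0 \<le> x \<Longrightarrow> x \<le> int N \<Longrightarrow> x mod (1 + int N) = x" by simp
lemma mod_N1_shift: "(x + (-1) * (1 + int N)) mod (1 + int N) = x mod (1 + int N)" "(x + 1 * (1 + int N)) mod (1 + int N) = x mod (1 + int N)"
  by (simp only: mod_mult_self1)+
lemma mod_N1_minus_1: "(- 1) mod (1 + int N) = int N"
  using mod_N1_shift(1)[of "int N"] by simp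
lemma mod_N1_minus_2: "(- 2) mod (1 + int N) = int N - 1"
  using mod_N1_shift(1)[of "int N - 1"] N_ge_3 by simp
lemma mod_N1_N_plus_2: "(int N + 2) mod (1 + int N) = 1" "(2 + int N) mod (1 + int N) = 1"
  using mod_N1_shift(2)[of 1] N_ge_3 by (simp_all add: add.commute)
lemma mod_N1_N_plus_1: "(int N + 1) mod (1 + int N) = 0" "(1 + int N) mod (1 + int N) = 0"
  by (simp_all add: add.commute)
lemmas mod_N1_simps = mod_N1_id mod_N1_minus_1 mod_N1_minus_2 mod_N1_N_plus_2 mod_N1_N_plus_1

text \<open>The relations are first checked at position \<open>0\<close> and for indices in \<open>[0, N]\<close>;
  translating a sequence translates the index of \<open>gen_op\<close>, which gives them in general.\<close>

lemma gen_op_quadratic_0: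
  assumes m: "carrier_seq m" and j: "0 \<le> j" "j \<le> int N"
  shows "gen_op j (gen_op j m) 0 = cc \<otimes> gen_op j m 0 \<oplus> m 0"
proof -
  consider "j = int N" | "j = 0" | "1 \<le> j \<and> j \<le> int N - 1" using j by linarith
  then show ?thesis
  proof cases
    case 1
    then show ?thesis using m N_ge_3 by (simp add: gen_op_def mod_N1_simps) (simp add: local_op_def rhoinv_rho')
  next
    case 2
    then show ?thesis using m N_ge_3 by (simp add: gen_op_def mod_N1_simps) (simp add: local_op_def rho_rhoinv' r_distr cc_left_commute)
  next
    case 3
    then show ?thesis using m N_ge_3 by (simp add: gen_op_def mod_N1_simps) (simp add: local_op_def quadratic')
  qed
qed

lemma t_cc: "z \<in> carrier R \<Longrightarrow> t x \<otimes> (cc \<otimes> z) = cc \<otimes> (t x \<otimes> z)" by (simp add: cc_left_commute)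
lemma rho_cc: "z \<in> carrier R \<Longrightarrow> rh \<otimes> (cc \<otimes> z) = cc \<otimes> (rh \<otimes> z)" by (simp add: cc_left_commute)
lemma rhoinv_cc: "z \<in> carrier R \<Longrightarrow> rhi \<otimes> (cc \<otimes> z) = cc \<otimes> (rhi \<otimes> z)" by (simp add: cc_left_commute)
lemma rho_t_rhoinv: "z \<in> carrier R \<Longrightarrow> rh \<otimes> (t x \<otimes> (rhi \<otimes> z)) = t (x + 1) \<otimes> z"
  by (simp add: rho_t' rho_rhoinv')
lemma rhoinv_t_rho: "z \<in> carrier R \<Longrightarrow> rhi \<otimes> (t x \<otimes> (rh \<otimes> z)) = t (x - 1) \<otimes> z"
proof -
  assume z: "z \<in> carrier R"
  have "t x \<otimes> (rh \<otimes> z) = rh \<otimes> (t (x - 1) \<otimes> z)" using rho_t'[OF z, of "x - 1"] by simp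
  then show ?thesis using z by (simp add: rhoinv_rho')
qed
lemma t_add_N: "t (x + int N) = t x" "t (int N + x) = t x"
  by (rule t_cong, simp)+

lemma t_shift_N: "x = y + int N \<Longrightarrow> t x = t y"
  by (rule t_cong) (simp only: mod_add_self2)

lemma t_rhoinv_rhoinv: "z \<in> carrier R \<Longrightarrow> t (int N - 1 + im) \<otimes> (rhi \<otimes> (rhi \<otimes> z)) = rhi \<otimes> (rhi \<otimes> (t (1 + im) \<otimes> z))"
proof -
  assume z: "z \<in> carrier R"
  have "t (int N - 1 + im) \<otimes> (rhi \<otimes> (rhi \<otimes> z)) = rhi \<otimes> (rhi \<otimes> (t (int N - 1 + im + 1 + 1) \<otimes> z))"
    using z by (simp add: t_rhoinv')
  also have "t (int N - 1 + im + 1 + 1) = t (1 + im)" by (rule t_shift_N) simp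
  finally show ?thesis .
qed
lemma rho_rho_t: "z \<in> carrier R \<Longrightarrow> rh \<otimes> (rh \<otimes> (t (int N - 1 + im) \<otimes> z)) = t (1 + im) \<otimes> (rh \<otimes> (rh \<otimes> z))"
proof -
  assume z: "z \<in> carrier R"
  have "rh \<otimes> (rh \<otimes> (t (int N - 1 + im) \<otimes> z)) = t (int N - 1 + im + 1 + 1) \<otimes> (rh \<otimes> (rh \<otimes> z))"
    using z by (simp add: rho_t')
  also have "t (int N - 1 + im + 1 + 1) = t (1 + im)" by (rule t_shift_N) simp
  finally show ?thesis .
qed

lemma gen_op_braid_N:
  assumes m: "carrier_seq m" and j: "j = int N"
  shows "gen_op j (gen_op (j + 1) (gen_op j m)) 0 = gen_op (j + 1) (gen_op j (gen_op (j + 1) m)) 0"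
  using m N_ge_3 j
  by (simp add: gen_op_def mod_N1_simps)
    (simp add: local_op_def r_distr t_cc rho_cc rhoinv_cc rho_t_rhoinv rhoinv_t_rho t_add_N)
lemma gen_op_braid_0:
  assumes m: "carrier_seq m" and j: "j = 0"
  shows "gen_op j (gen_op (j + 1) (gen_op j m)) 0 = gen_op (j + 1) (gen_op j (gen_op (j + 1) m)) 0"
  using m N_ge_3 j by (simp add: gen_op_def mod_N1_simps) (simp add: local_op_def rho_rho_t)
lemma gen_op_braid_N1:
  assumes m: "carrier_seq m" and j: "j = int N - 1"
  shows "gen_op j (gen_op (j + 1) (gen_op j m)) 0 = gen_op (j + 1) (gen_op j (gen_op (j + 1) m)) 0"
  using m N_ge_3 j
  by (simp add: gen_op_def mod_N1_simps)
    (simp add: local_op_def r_distr t_cc rho_cc rhoinv_cc t_rhoinv_rhoinv quadratic' rhoinv_rho' a_ac)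
lemma gen_op_braid_mid:
  assumes m: "carrier_seq m" and j: "1 \<le> j" "j \<le> int N - 2"
  shows "gen_op j (gen_op (j + 1) (gen_op j m)) 0 = gen_op (j + 1) (gen_op j (gen_op (j + 1) m)) 0"
proof -
  have e: "j + 1 + im = (j + im) + 1" by simp
  show ?thesis using m N_ge_3 j by (simp add: gen_op_def mod_N1_simps) (simp add: local_op_def e braid')
qed

lemma gen_op_commute_N:
  assumes m: "carrier_seq m" and j2: "1 \<le> j2" "j2 \<le> int N - 2"
  shows "gen_op (int N) (gen_op j2 m) 0 = gen_op j2 (gen_op (int N) m) 0"
proof -
  have e: "j2 + 1 + im = (j2 + im) + 1" by simp
  have r: "t (j2 + im) \<otimes> (rhi \<otimes> z) = rhi \<otimes> (t (j2 + 1 + im) \<otimes> z)" if "z \<in> carrier R" for z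
    unfolding e by (rule t_rhoinv'[OF that])
  show ?thesis using m N_ge_3 j2 by (simp add: gen_op_def mod_N1_simps) (simp add: local_op_def r_distr t_cc r)
qed

lemma gen_op_commute_0:
  assumes m: "carrier_seq m" and j2: "2 \<le> j2" "j2 \<le> int N - 1"
  shows "gen_op 0 (gen_op j2 m) 0 = gen_op j2 (gen_op 0 m) 0"
proof -
  have e: "j2 + im = (j2 - 1 + im) + 1" by simp
  have r: "rh \<otimes> (t (j2 - 1 + im) \<otimes> z) = t (j2 + im) \<otimes> (rh \<otimes> z)" if "z \<in> carrier R" for z
    unfolding e by (rule rho_t'[OF that])
  show ?thesis using m N_ge_3 j2 by (simp add: gen_op_def mod_N1_simps) (simp add: local_op_def r)
qed

lemma gen_op_commute_mid:
  assumes m: "carrier_seq m" and j: "1 \<le> j1" "j1 \<le> int N - 1" "1 \<le> j2" "j2 \<le> int N - 1"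
   "j1 - j2 \<noteq> 1" "j1 - j2 \<noteq> -1"
  shows "gen_op j1 (gen_op j2 m) 0 = gen_op j2 (gen_op j1 m) 0"
proof (cases "j1 = j2")
  case True then show ?thesis by simp
next
  case False
  have c: "t (j1 + im) \<otimes> (t (j2 + im) \<otimes> z) = t (j2 + im) \<otimes> (t (j1 + im) \<otimes> z)" if "z \<in> carrier R" for z
    by (rule t_commute_far'[OF _ that]) (use j False in auto)
  show ?thesis using m N_ge_3 j by (simp add: gen_op_def mod_N1_simps) (simp add: local_op_def c)
qed

lemma not_adjacent_mod_cases:
  assumes "\<not> [a = 1] (mod (1 + int N))" "\<not> [a = -1] (mod (1 + int N))"
  shows "a \<noteq> 1" "a \<noteq> -1" "a \<noteq> int N" "a \<noteq> - int N"
proof -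
  show "a \<noteq> 1" using assms(1) by auto
  show "a \<noteq> -1" using assms(2) by auto
  show "a \<noteq> int N"
  proof
    assume "a = int N"
    then have "[a = -1] (mod (1 + int N))" by (simp add: cong_def mod_N1_minus_1)
    with assms(2) show False ..
  qed
  show "a \<noteq> - int N"
  proof
    assume "a = - int N"
    then have "a = 1 + (-1) * (1 + int N)" by simp
    then have "[a = 1] (mod (1 + int N))" by (simp only: cong_def mod_mult_self1)
    with assms(1) show False ..
  qed
qed

lemma gen_op_commute_reduced:
  assumes m: "carrier_seq m" and j: "0 \<le> j1" "j1 \<le> int N" "0 \<le> j2" "j2 \<le> int N"
  and h: "\<not> [j1 - j2 = 1] (mod (1 + int N))" "\<not> [j1 - j2 = -1] (mod (1 + int N))"
  shows "gen_op j1 (gen_op j2 m) 0 = gen_op j2 (gen_op j1 m) 0"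
proof -
  note cf = not_adjacent_mod_cases[OF h]
  consider "j1 = j2" | "j1 = int N" "j2 \<noteq> j1" | "j1 = 0" "j2 \<noteq> j1" | "j2 = int N" "j2 \<noteq> j1" | "j2 = 0" "j2 \<noteq> j1"
    | "1 \<le> j1" "j1 \<le> int N - 1" "1 \<le> j2" "j2 \<le> int N - 1" using j by linarith
  then show ?thesis
  proof cases
    case 1 then show ?thesis by simp
  next
    case 2 then show ?thesis using gen_op_commute_N[OF m, of j2] cf j by auto
  next
    case 3 then show ?thesis using gen_op_commute_0[OF m, of j2] cf j by auto
  next
    case 4 then show ?thesis using gen_op_commute_N[OF m, of j1] cf j by auto
  next
    case 5 then show ?thesis using gen_op_commute_0[OF m, of j1] cf j by auto
  next
    case 6 then show ?thesis using gen_op_commute_mid[OF m] cf by auto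
  qed
qed

lemma gen_op_cong: "x mod int (N + 1) = y mod int (N + 1) \<Longrightarrow> gen_op x = gen_op y"
  by (metis gen_op_mod)

lemma gen_op_shift0: "gen_op c m k = gen_op (c - k) (\<lambda>y. m (y + k)) 0"
  using gen_op_shift[of c m 0 k] by simp

lemma mod_range: "0 \<le> x mod int (N + 1)" "x mod int (N + 1) \<le> int N"
proof -
  have "x mod int (N + 1) < int (N + 1)" by (rule pos_mod_bound) simp
  then show "x mod int (N + 1) \<le> int N" by linarith
  show "0 \<le> x mod int (N + 1)" by (rule pos_mod_sign) simp
qed

lemma gen_op_quadratic:
  assumes m: "carrier_seq m" shows "gen_op c (gen_op c m) k = cc \<otimes> gen_op c m k \<oplus> m k"
proof -
  define m' where "m' = (\<lambda>y. m (y + k))"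
  define j where "j = (c - k) mod int (N + 1)"
  have m': "carrier_seq m'" using m by (simp add: m'_def carrier_seq_def)
  have "gen_op c (gen_op c m) k = gen_op (c - k) (gen_op (c - k) m') 0"
    by (simp add: gen_op_shift0[of c "gen_op c m" k] gen_op_shift_fun m'_def)
  also have "\<dots> = gen_op j (gen_op j m') 0" by (simp only: j_def gen_op_mod)
  also have "\<dots> = cc \<otimes> gen_op j m' 0 \<oplus> m' 0" by (rule gen_op_quadratic_0[OF m']) (use mod_range j_def in auto)
  also have "\<dots> = cc \<otimes> gen_op c m k \<oplus> m k" by (simp only: j_def gen_op_mod m'_def) (simp add: gen_op_shift0[of c m k])
  finally show ?thesis .
qed

lemma gen_op_braid:
  assumes m: "carrier_seq m" shows "gen_op c (gen_op (c + 1) (gen_op c m)) k = gen_op (c + 1) (gen_op c (gen_op (c + 1) m)) k"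
proof -
  define m' where "m' = (\<lambda>y. m (y + k))"
  define j where "j = (c - k) mod int (N + 1)"
  have m': "carrier_seq m'" using m by (simp add: m'_def carrier_seq_def)
  have o1: "gen_op (c - k) = gen_op j" by (simp only: j_def gen_op_mod)
  have o2: "gen_op (c + 1 - k) = gen_op (j + 1)" by (rule gen_op_cong) (simp add: j_def mod_simps algebra_simps)
  have "gen_op c (gen_op (c + 1) (gen_op c m)) k = gen_op (c - k) (gen_op (c + 1 - k) (gen_op (c - k) m')) 0"
    by (simp add: gen_op_shift0[of c _ k] gen_op_shift_fun m'_def)
  also have "\<dots> = gen_op j (gen_op (j + 1) (gen_op j m')) 0" by (simp only: o1 o2)
  also have "\<dots> = gen_op (j + 1) (gen_op j (gen_op (j + 1) m')) 0"
  proof -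
    have "0 \<le> j" "j \<le> int N" using mod_range j_def by auto
    then consider "j = int N" | "j = 0" | "j = int N - 1" | "1 \<le> j \<and> j \<le> int N - 2" by linarith
    then show ?thesis using gen_op_braid_N[OF m'] gen_op_braid_0[OF m'] gen_op_braid_N1[OF m'] gen_op_braid_mid[OF m'] by cases auto
  qed
  also have "\<dots> = gen_op (c + 1 - k) (gen_op (c - k) (gen_op (c + 1 - k) m')) 0" by (simp only: o1 o2)
  also have "\<dots> = gen_op (c + 1) (gen_op c (gen_op (c + 1) m)) k"
    by (simp add: gen_op_shift0[of "c + 1" _ k] gen_op_shift_fun m'_def)
  finally show ?thesis .
qed

lemma gen_op_commute:
  assumes m: "carrier_seq m" and h: "\<not> [c1 - c2 = 1] (mod int (N + 1))" "\<not> [c1 - c2 = -1] (mod int (N + 1))"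
  shows "gen_op c1 (gen_op c2 m) k = gen_op c2 (gen_op c1 m) k"
proof -
  define m' where "m' = (\<lambda>y. m (y + k))"
  define j1 where "j1 = (c1 - k) mod int (N + 1)"
  define j2 where "j2 = (c2 - k) mod int (N + 1)"
  have m': "carrier_seq m'" using m by (simp add: m'_def carrier_seq_def)
  have o1: "gen_op (c1 - k) = gen_op j1" by (simp only: j1_def gen_op_mod)
  have o2: "gen_op (c2 - k) = gen_op j2" by (simp only: j2_def gen_op_mod)
  have md: "(j1 - j2) mod int (N + 1) = (c1 - c2) mod int (N + 1)"
    by (simp add: j1_def j2_def mod_diff_eq)
  have h': "\<not> [j1 - j2 = 1] (mod (1 + int N))" "\<not> [j1 - j2 = -1] (mod (1 + int N))"
    using h md by (simp_all add: cong_def add.commute)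
  have "gen_op c1 (gen_op c2 m) k = gen_op j1 (gen_op j2 m') 0"
    by (simp add: gen_op_shift0[of c1 _ k] gen_op_shift_fun m'_def o1 o2)
  also have "\<dots> = gen_op j2 (gen_op j1 m') 0"
    by (rule gen_op_commute_reduced[OF m' _ _ _ _ h']) (use mod_range j1_def j2_def in auto)
  also have "\<dots> = gen_op c2 (gen_op c1 m) k"
    by (simp add: gen_op_shift0[of c2 _ k] gen_op_shift_fun m'_def o1 o2)
  finally show ?thesis .
qed

end

text \<open>The quotient \<open>Hecke r\<close> is a structure rather than a type, so the action is defined on
  sequences of free-algebra elements and read modulo the defining ideal of \<open>H\<^sup>e\<^sub>r\<close> through
  \<open>cls_seq\<close>, which turns \<open>gen_opF\<close> into \<open>gen_op\<close>.\<close>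

definition local_opF :: "nat \<Rightarrow> int \<Rightarrow> int \<Rightarrow> freealg \<Rightarrow> freealg \<Rightarrow> freealg \<Rightarrow> freealg" where
  "local_opF r im j x y z =
    (if j = int r then cparam * y + letter RhoInv * x else if j = 0 then letter Rho * z else tletter (j + im) * y)"

definition gen_opF :: "nat \<Rightarrow> int \<Rightarrow> int \<Rightarrow> (int \<Rightarrow> freealg) \<Rightarrow> int \<Rightarrow> freealg" where
  "gen_opF r im c m k = local_opF r im ((c - k) mod int (r + 1)) (m (k - 1)) (m k) (m (k + 1))"

definition seq_op :: "nat \<Rightarrow> int \<Rightarrow> gen \<Rightarrow> (int \<Rightarrow> freealg) \<Rightarrow> (int \<Rightarrow> freealg)" where
  "seq_op r im g m = (case g of
      T i \<Rightarrow> gen_opF r im (i - im - 1) m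
    | Rho \<Rightarrow> (\<lambda>k. m (k - 1))
    | RhoInv \<Rightarrow> (\<lambda>k. m (k + 1)))"

definition seq_scal :: "laurent \<Rightarrow> (int \<Rightarrow> freealg) \<Rightarrow> (int \<Rightarrow> freealg)" where
  "seq_scal a m = (\<lambda>k. const a * m k)"

lemma local_opF_add:
  "local_opF r im j (x + x') (y + y') (z + z') = local_opF r im j x y z + local_opF r im j x' y' z'"
  by (simp add: local_opF_def distrib_left)

lemma local_opF_const:
  "const a * local_opF r im j x y z = local_opF r im j (const a * x) (const a * y) (const a * z)"
  by (simp add: local_opF_def distrib_left const_mult_left_commute)

interpretation seq: letter_rep seq_scal "seq_op r im" for r im
proof
  fix g and x y :: "int \<Rightarrow> freealg"
  show "seq_op r im g (x + y) = seq_op r im g x + seq_op r im g y"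
    by (cases g) (auto simp: seq_op_def gen_opF_def local_opF_add fun_eq_iff)
next
  fix a g x show "seq_scal a (seq_op r im g x) = seq_op r im g (seq_scal a x)"
    by (cases g) (auto simp: seq_scal_def seq_op_def gen_opF_def local_opF_const fun_eq_iff)
qed (simp_all add: seq_scal_def fun_eq_iff distrib_left distrib_right const_add const_mult mult.assoc const_one)

definition ideal_seq :: "nat \<Rightarrow> (int \<Rightarrow> freealg) \<Rightarrow> bool" where
  "ideal_seq n m \<longleftrightarrow> (\<forall>k. m k \<in> hecke_ideal n)"

lemma ideal_seq_add: "ideal_seq r m \<Longrightarrow> ideal_seq r m' \<Longrightarrow> ideal_seq r (m + m')"
  by (auto simp: ideal_seq_def intro!: hecke_ideal_add)

lemma ideal_seq_act_word: "ideal_seq r m \<Longrightarrow> ideal_seq r (act_word (seq_op r im) w m)"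
proof (cases w)
  case (Word xs)
  have "ideal_seq r m \<Longrightarrow> ideal_seq r (seq_op r im g m)" for g m
    by (cases g) (auto simp: ideal_seq_def seq_op_def gen_opF_def local_opF_def intro!: hecke_ideal_add hecke_ideal_lmult)
  with Word show "ideal_seq r m \<Longrightarrow> ?thesis" by (induct xs arbitrary: w) auto
qed

lemma ideal_seq_act: "ideal_seq r m \<Longrightarrow> ideal_seq r (seq.act r im p m)"
proof (induct p rule: poly_mapping_single_induct)
  case zero then show ?case by (simp add: ideal_seq_def hecke_ideal_zero)
next
  case (add p w b)
  have "ideal_seq r (seq_scal b (act_word (seq_op r im) w m))"
    using ideal_seq_act_word[OF add.prems] by (auto simp: ideal_seq_def seq_scal_def intro!: hecke_ideal_lmult)
  then show ?case unfolding seq.act_add_p seq.act_single using add by (intro ideal_seq_add)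
qed

lemma ideal_annihilator_ideal_seq: "ideal {p. \<forall>m. ideal_seq r (seq.act r im p m)} FA"
  by (rule ideal_FA_I)
    (auto simp: seq.act_add_p seq.act_neg_p seq.act_mult ideal_seq_add ideal_seq_act,
     auto simp: ideal_seq_def hecke_ideal_zero hecke_ideal_neg)

definition cls_seq :: "nat \<Rightarrow> (int \<Rightarrow> freealg) \<Rightarrow> int \<Rightarrow> freealg set" where
  "cls_seq r m = (\<lambda>k. cls r (m k))"

lemma cls_seq_add: "cls_seq r (m1 + m2) = (\<lambda>k. cls_seq r m1 k \<oplus>\<^bsub>Hecke r\<^esub> cls_seq r m2 k)"
  by (simp add: cls_seq_def cls_add)

lemma cls_seq_eq_iff: "cls_seq r m1 = cls_seq r m2 \<longleftrightarrow> ideal_seq r (m1 - m2)"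
  by (simp add: cls_seq_def ideal_seq_def fun_eq_iff cls_eq_iff)

lemma cls_seq_act_cong: "cls_seq r m1 = cls_seq r m2 \<Longrightarrow> cls_seq r (seq.act r im p m1) = cls_seq r (seq.act r im p m2)"
  by (simp add: cls_seq_eq_iff ideal_seq_act flip: seq.act_diff_m)

context
  fixes r :: nat and im :: int
  assumes r: "r > 2"
begin

interpretation Q: seq_module "Hecke r" r "gT r" "gRho r" "gRhoInv r" "scal r (vv - vinv)" im
  by (rule seq_module.intro, rule hecke_rels_Hecke[OF r])

lemma carrier_seq_cls_seq: "Q.carrier_seq (cls_seq r m)"
  by (simp add: Q.carrier_seq_def cls_seq_def)

lemma cls_seq_act_T: "cls_seq r (seq.act r im (letter (T i)) m) = Q.gen_op (i - im - 1) (cls_seq r m)"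
  unfolding seq.act_letter seq_op_def gen_opF_def Q.gen_op_def local_opF_def Q.local_op_def
  by (rule ext) (simp add: cls_seq_def cls_add cls_mult cparam_def scal_def gRhoInv_def gRho_def gT_def tletter_def)

lemma cls_seq_act_Rho: "cls_seq r (seq.act r im (letter Rho) m) = (\<lambda>k. cls_seq r m (k - 1))"
  by (simp add: seq.act_letter seq_op_def cls_seq_def)

lemma cls_seq_act_RhoInv: "cls_seq r (seq.act r im (letter RhoInv) m) = (\<lambda>k. cls_seq r m (k + 1))"
  by (simp add: seq.act_letter seq_op_def cls_seq_def)

lemma cls_seq_act_const: "cls_seq r (seq.act r im (const a) m) = (\<lambda>k. scal r a \<otimes>\<^bsub>Hecke r\<^esub> cls_seq r m k)"
  by (simp add: seq.act_const seq_scal_def cls_seq_def cls_mult scal_def)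

lemma cls_seq_act_add: "cls_seq r (seq.act r im (p + q) m) = (\<lambda>k. cls_seq r (seq.act r im p m) k \<oplus>\<^bsub>Hecke r\<^esub> cls_seq r (seq.act r im q m) k)"
  by (simp add: seq.act_add_p cls_seq_def cls_add)

lemma ideal_seq_act_rel:
  assumes "x \<in> rels (r + 1)"
  shows "ideal_seq r (seq.act r im x m)"
proof -
  have diff: "ideal_seq r (seq.act r im (a - b) m)"
    if "cls_seq r (seq.act r im a m) = cls_seq r (seq.act r im b m)" for a b
    using that by (simp add: seq.act_diff_p cls_seq_eq_iff)
  from assms show ?thesis
  proof (cases rule: rels_cases)
    case (mod i)
    have "(i mod int (r + 1) - im - 1 - k) mod int (r + 1) = (i - im - 1 - k) mod int (r + 1)" for k
      by (metis diff_diff_eq mod_diff_left_eq)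
    then have "seq_op r im (T i) = seq_op r im (T (i mod int (r + 1)))"
      by (simp add: seq_op_def gen_opF_def fun_eq_iff)
    then show ?thesis by (simp add: mod seq.act_diff_p seq.act_letter ideal_seq_def hecke_ideal_zero)
  next
    case (quadratic i)
    show ?thesis unfolding quadratic hecke_quadratic_expand
      by (rule diff)
        (simp only: seq.act_mult seq.act_one cls_seq_act_T cls_seq_act_add cls_seq_act_const,
         rule ext, rule Q.gen_op_quadratic[OF carrier_seq_cls_seq])
  next
    case (braid i)
    have "i + 1 - im - 1 = (i - im - 1) + 1" by simp
    then show ?thesis unfolding braid
      by (intro diff) (simp only: seq.act_mult cls_seq_act_T, rule ext, rule Q.gen_op_braid[OF carrier_seq_cls_seq])
  next
    case (commute i j)
    then have "\<not> [(i - im - 1) - (j - im - 1) = 1] (mod int (r + 1))"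
      "\<not> [(i - im - 1) - (j - im - 1) = -1] (mod int (r + 1))" by simp_all
    then show ?thesis unfolding commute(1)
      by (intro diff) (simp only: seq.act_mult cls_seq_act_T, rule ext, rule Q.gen_op_commute[OF carrier_seq_cls_seq])
  next
    case (rho i)
    have "seq_op r im Rho (seq_op r im (T i) m) = seq_op r im (T (i + 1)) (seq_op r im Rho m)" for m
      by (simp add: seq_op_def gen_opF_def fun_eq_iff algebra_simps)
    then show ?thesis by (simp add: rho seq.act_diff_p seq.act_mult seq.act_letter ideal_seq_def hecke_ideal_zero)
  next
    case rho_rhoinv
    then show ?thesis
      by (simp add: seq.act_diff_p seq.act_mult seq.act_letter seq.act_one seq_op_def ideal_seq_def hecke_ideal_zero)
  next
    case rhoinv_rho
    then show ?thesis
      by (simp add: seq.act_diff_p seq.act_mult seq.act_letter seq.act_one seq_op_def ideal_seq_def hecke_ideal_zero)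
  qed
qed

lemma ideal_seq_act_hecke_ideal: "p \<in> hecke_ideal (r + 1) \<Longrightarrow> ideal_seq r (seq.act r im p m)"
  using hecke_ideal_minimal[OF ideal_annihilator_ideal_seq] ideal_seq_act_rel by blast

end

section \<open>Injectivity\<close>

context seq_module begin

definition delta :: "int \<Rightarrow> 'a \<Rightarrow> int \<Rightarrow> 'a" where "delta p y = (\<lambda>k. if k = p then y else \<zero>)"

lemma gen_op_delta_far:
  assumes y: "y \<in> carrier R" and u: "1 \<le> u" "u \<le> int N - 1"
  shows "gen_op u (delta 0 y) = delta 0 (t (u + im) \<otimes> y)"
  by (rule ext) (use assms N_ge_3 in \<open>auto simp: gen_op_def delta_def mod_N1_simps local_op_def\<close>)

lemma gen_op_delta_tinv:
  assumes y: "y \<in> carrier R"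
  shows "(\<lambda>k. gen_op (- 1) (delta 0 y) k \<ominus> cc \<otimes> delta 0 y k) = delta (-1) (rh \<otimes> y)"
  by (rule ext) (use assms N_ge_3 in \<open>auto simp: gen_op_def delta_def mod_N1_simps local_op_def a_minus_def r_neg\<close>)

lemma gen_op_delta_rho:
  assumes y: "y \<in> carrier R"
  shows "gen_op 0 (delta (-1) y) = delta (-1) (t (1 + im) \<otimes> y)"
  by (rule ext) (use assms N_ge_3 in \<open>auto simp: gen_op_def delta_def mod_N1_simps local_op_def\<close>)

lemma gen_op_delta_rhoinv:
  assumes y: "y \<in> carrier R"
  shows "gen_op (- 1) (delta (-1) y) = delta 0 (rhi \<otimes> y)"
  by (rule ext) (use assms N_ge_3 in \<open>auto simp: gen_op_def delta_def mod_N1_simps local_op_def\<close>)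

lemma gen_op_delta_tinv_rho:
  assumes y: "y \<in> carrier R"
  shows "(\<lambda>k. gen_op 0 (delta 1 y) k \<ominus> cc \<otimes> delta 1 y k) = delta 0 (rh \<otimes> y)"
  by (rule ext) (use assms N_ge_3 in \<open>auto simp: gen_op_def delta_def mod_N1_simps local_op_def a_minus_def r_neg\<close>)

lemma gen_op_delta_rhoinv_shift:
  assumes y: "y \<in> carrier R"
  shows "(\<lambda>k. gen_op 0 (delta 0 y) (k + 1)) = delta 0 (rhi \<otimes> y)"
  by (rule ext) (use assms N_ge_3 in \<open>auto simp: gen_op_def delta_def mod_N1_simps local_op_def\<close>)

end

definition deltaF :: "int \<Rightarrow> freealg \<Rightarrow> int \<Rightarrow> freealg" where
  "deltaF p h = (\<lambda>k. if k = p then h else 0)"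

context
  fixes r :: nat and im :: int
  assumes r: "r > 2"
begin

interpretation Q: seq_module "Hecke r" r "gT r" "gRho r" "gRhoInv r" "scal r (vv - vinv)" im
  by (rule seq_module.intro, rule hecke_rels_Hecke[OF r])

lemma cls_seq_deltaF: "cls_seq r (deltaF p h) = Q.delta p (cls r h)"
  by (rule ext) (simp add: cls_seq_def deltaF_def Q.delta_def cls_zero)

lemma cls_seq_act_tinv:
  "cls_seq r (seq.act r im (tinv_letter j) m)
     = (\<lambda>k. Q.gen_op (j - im - 1) (cls_seq r m) k \<ominus>\<^bsub>Hecke r\<^esub> scal r (vv - vinv) \<otimes>\<^bsub>Hecke r\<^esub> cls_seq r m k)"
  using fun_cong[OF cls_seq_act_T[OF r, where i = j and m = m]]
  by (simp add: tinv_letter_def tletter_def cparam_def seq.act_diff_p seq.act_const seq_scal_def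
      cls_seq_def cls_diff cls_mult scal_def fun_eq_iff)

lemma delta_shift: "(\<lambda>k. Q.delta 0 y (k - 1)) = Q.delta 1 y"
  by (rule ext) (simp add: Q.delta_def)

lemma cls_seq_act_phi_T_deltaF:
  assumes "(i - im) mod int r \<noteq> 0"
  shows "cls_seq r (seq.act r im (phi_letter r im (T i)) (deltaF 0 h)) = cls_seq r (deltaF 0 (letter (T i) * h))"
proof -
  define u where "u = (i - im) mod int r"
  have "0 \<le> u" "u < int r" using r by (auto simp: u_def)
  then have u: "1 \<le> u" "u \<le> int r - 1" using assms by (auto simp: u_def)
  have "gT r (u + im) = gT r i"
    by (rule Q.t_cong) (simp add: u_def mod_add_left_eq)
  moreover have "phi_letter r im (T i) = letter (T (u + im + 1))"
    using assms by (simp add: phi_letter_def u_def tletter_def)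
  ultimately show ?thesis
    using Q.gen_op_delta_far[OF _ u, of "cls r h"]
    by (simp add: cls_seq_act_T[OF r] cls_seq_deltaF cls_mult gT_def)
qed

lemma cls_seq_act_phi_T_im_deltaF:
  assumes "(i - im) mod int r = 0"
  shows "cls_seq r (seq.act r im (phi_letter r im (T i)) (deltaF 0 h)) = cls_seq r (deltaF 0 (letter (T i) * h))"
proof -
  txt \<open>The entry \<open>h\<close> moves to position \<open>-1\<close> as \<open>T\<^sub>\<rho> h\<close>, is multiplied there by
    \<open>T\<^sub>i\<^sub>m\<^sub>+\<^sub>1\<close>, and comes back as \<open>T\<^sub>\<rho>\<^sup>-\<^sup>1 T\<^sub>i\<^sub>m\<^sub>+\<^sub>1 T\<^sub>\<rho> h = T\<^sub>i\<^sub>m h\<close>.\<close>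
  have "gT r im = gT r i"
    by (rule Q.t_cong) (use assms in \<open>simp add: mod_eq_dvd_iff dvd_eq_mod_eq_0[symmetric], metis dvd_minus_iff minus_diff_eq\<close>)
  moreover have "gRhoInv r \<otimes>\<^bsub>Hecke r\<^esub> (gT r (1 + im) \<otimes>\<^bsub>Hecke r\<^esub> (gRho r \<otimes>\<^bsub>Hecke r\<^esub> cls r h))
      = gT r im \<otimes>\<^bsub>Hecke r\<^esub> cls r h"
    using Q.rhoinv_t_rho[of "cls r h" "1 + im"] by simp
  moreover have "phi_letter r im (T i) = letter (T im) * letter (T (im + 1)) * tinv_letter im"
    using assms by (simp add: phi_letter_def tletter_def)
  ultimately show ?thesis
    by (simp add: seq.act_mult cls_seq_act_T[OF r] cls_seq_act_tinv cls_seq_deltaF Q.gen_op_delta_tinv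
        Q.gen_op_delta_rho Q.gen_op_delta_rhoinv cls_mult gT_def)
qed

lemma cls_seq_act_phi_Rho_deltaF:
  "cls_seq r (seq.act r im (phi_letter r im Rho) (deltaF 0 h)) = cls_seq r (deltaF 0 (letter Rho * h))"
  by (simp add: phi_letter_def seq.act_mult cls_seq_act_tinv cls_seq_act_Rho[OF r] cls_seq_deltaF delta_shift
      Q.gen_op_delta_tinv_rho cls_mult flip: gRho_def)

lemma cls_seq_act_phi_RhoInv_deltaF:
  "cls_seq r (seq.act r im (phi_letter r im RhoInv) (deltaF 0 h)) = cls_seq r (deltaF 0 (letter RhoInv * h))"
  by (simp add: phi_letter_def seq.act_mult tletter_def cls_seq_act_T[OF r] cls_seq_act_RhoInv[OF r]
      cls_seq_deltaF Q.gen_op_delta_rhoinv_shift cls_mult flip: gRhoInv_def)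

lemma cls_seq_act_phi_letter_deltaF:
  "cls_seq r (seq.act r im (phi_letter r im g) (deltaF 0 h)) = cls_seq r (deltaF 0 (letter g * h))"
proof (cases g)
  case (T i)
  then show ?thesis
    using cls_seq_act_phi_T_deltaF[of i] cls_seq_act_phi_T_im_deltaF[of i] by blast
qed (simp_all add: cls_seq_act_phi_Rho_deltaF cls_seq_act_phi_RhoInv_deltaF)

lemma cls_seq_act_phi_deltaF:
  "cls_seq r (seq.act r im (subst_hom (phi_letter r im) y) (deltaF 0 h)) = cls_seq r (deltaF 0 (y * h))"
proof (induct y rule: freealg_induct)
  case (const a)
  have "seq.act r im (const a) (deltaF 0 h) = deltaF 0 (const a * h)"
    by (simp add: seq.act_const seq_scal_def deltaF_def fun_eq_iff)
  then show ?case by (simp only: subst_hom_const)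
next
  case (letter_mult g y)
  have "cls_seq r (seq.act r im (subst_hom (phi_letter r im) (letter g * y)) (deltaF 0 h))
      = cls_seq r (seq.act r im (phi_letter r im g) (seq.act r im (subst_hom (phi_letter r im) y) (deltaF 0 h)))"
    by (simp only: subst_hom_mult subst_hom_letter seq.act_mult)
  also have "\<dots> = cls_seq r (seq.act r im (phi_letter r im g) (deltaF 0 (y * h)))"
    by (rule cls_seq_act_cong[OF letter_mult])
  also have "\<dots> = cls_seq r (deltaF 0 (letter g * y * h))"
    by (simp only: cls_seq_act_phi_letter_deltaF mult.assoc)
  finally show ?case .
next
  case (add x y)
  have "deltaF 0 ((x + y) * h) = deltaF 0 (x * h) + deltaF 0 (y * h)"
    by (simp add: deltaF_def fun_eq_iff distrib_right)
  then show ?case by (simp only: subst_hom_add seq.act_add_p cls_seq_add add)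
qed

lemma subst_phi_reflects_ideal:
  assumes "subst_hom (phi_letter r im) x \<in> hecke_ideal (r + 1)"
  shows "x \<in> hecke_ideal r"
proof -
  let ?y = "seq.act r im (subst_hom (phi_letter r im) x) (deltaF 0 1)"
  have "?y 0 \<in> hecke_ideal r"
    using ideal_seq_act_hecke_ideal[OF r assms] by (simp add: ideal_seq_def)
  moreover have "cls_seq r ?y 0 = cls_seq r (deltaF 0 (x * 1)) 0"
    by (simp only: cls_seq_act_phi_deltaF)
  then have "?y 0 - x \<in> hecke_ideal r"
    by (simp add: cls_seq_def deltaF_def cls_eq_iff)
  ultimately have "?y 0 - (?y 0 - x) \<in> hecke_ideal r" by (rule hecke_ideal_diff)
  then show ?thesis by simp
qed

end

section \<open>The induced homomorphism\<close>

definition induced_hom :: "nat \<Rightarrow> nat \<Rightarrow> (gen \<Rightarrow> freealg) \<Rightarrow> freealg set \<Rightarrow> freealg set" where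
  "induced_hom r s F C = cls s (subst_hom F (SOME x. C = cls r x))"

lemma induced_hom_cls:
  assumes "subst_hom F ` hecke_ideal r \<subseteq> hecke_ideal s"
  shows "induced_hom r s F (cls r x) = cls s (subst_hom F x)"
proof -
  let ?y = "SOME y. cls r x = cls r y"
  have "cls r x = cls r ?y" by (rule someI[of _ x]) simp
  then have "x - ?y \<in> hecke_ideal r" by (simp add: cls_eq_iff)
  then have "subst_hom F x - subst_hom F ?y \<in> hecke_ideal s"
    using assms by (auto simp flip: subst_hom_diff)
  then show ?thesis unfolding induced_hom_def by (metis cls_eq_iff hecke_ideal_neg minus_diff_eq)
qed

lemma induced_hom_hecke_alg_hom:
  assumes "subst_hom F ` hecke_ideal r \<subseteq> hecke_ideal s"
  shows "induced_hom r s F \<in> hecke_alg_hom r s"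
proof -
  note hom_cls = induced_hom_cls[OF assms]
  have "induced_hom r s F \<in> ring_hom (Hecke r) (Hecke s)"
    by (rule ring_hom_memI)
      (auto simp: carrier_Hecke hom_cls subst_hom_mult subst_hom_add subst_hom_one
        simp flip: cls_mult cls_add cls_one)
  moreover have "induced_hom r s F (scal r a) = scal s a" for a
    by (simp add: scal_def hom_cls subst_hom_const)
  ultimately show ?thesis by (simp add: hecke_alg_hom_def)
qed

lemma inj_on_induced_hom:
  assumes "subst_hom F ` hecke_ideal r \<subseteq> hecke_ideal s"
    and "\<And>x. subst_hom F x \<in> hecke_ideal s \<Longrightarrow> x \<in> hecke_ideal r"
  shows "inj_on (induced_hom r s F) (carrier (Hecke r))"
proof (rule inj_onI)
  fix X Y assume "X \<in> carrier (Hecke r)" "Y \<in> carrier (Hecke r)"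
    and eq: "induced_hom r s F X = induced_hom r s F Y"
  then obtain x y where xy: "X = cls r x" "Y = cls r y" by (auto simp: carrier_Hecke)
  with eq have "subst_hom F (x - y) \<in> hecke_ideal s"
    by (simp add: induced_hom_cls[OF assms(1)] cls_eq_iff subst_hom_diff)
  then show "X = Y" by (simp add: xy cls_eq_iff assms(2))
qed

lemma inv_gT: "n > 2 \<Longrightarrow> inv\<^bsub>Hecke n\<^esub> (gT n i) = cls n (tinv_letter i)"
proof -
  assume "n > 2"
  then interpret hecke_rels "Hecke n" n "gT n" "gRho n" "gRhoInv n" "scal n (vv - vinv)"
    by (rule hecke_rels_Hecke)
  have "cls n (tinv_letter i) = tinv i"
    unfolding tinv_def by (simp add: tinv_letter_def tletter_def cparam_def cls_diff gT_def scal_def)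
  then show ?thesis using inv_unique'[of "gT n i" "tinv i"] by (simp add: t_tinv tinv_t)
qed

context
  fixes r :: nat and im :: int
  assumes r: "r > 2"
begin

interpretation H: hecke_rels "Hecke (r + 1)" "r + 1" "gT (r + 1)" "gRho (r + 1)" "gRhoInv (r + 1)"
    "scal (r + 1) (vv - vinv)"
  by (rule hecke_rels_Hecke) (use r in simp)

lemma cls_phi_letter_T_below:
  assumes "1 \<le> i" "i < im" "im \<le> int r - 1"
  shows "cls (r + 1) (phi_letter r im (T i)) = gT (r + 1) i"
proof -
  have "(i - im) mod int r = (i - im + int r) mod int r" by simp
  also have "\<dots> = i - im + int r" using assms by (intro mod_pos_pos_trivial) auto
  finally have "cls (r + 1) (phi_letter r im (T i)) = gT (r + 1) (i + int (r + 1))"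
    using assms by (simp add: phi_letter_def tletter_def gT_def add_ac)
  also have "\<dots> = gT (r + 1) i" by (rule H.t_cong) simp
  finally show ?thesis .
qed

lemma cls_phi_letter_T_im:
  "cls (r + 1) (phi_letter r im (T im)) =
     gT (r + 1) im \<otimes>\<^bsub>Hecke (r + 1)\<^esub> gT (r + 1) (im + 1) \<otimes>\<^bsub>Hecke (r + 1)\<^esub> inv\<^bsub>Hecke (r + 1)\<^esub> (gT (r + 1) im)"
  using r by (simp add: phi_letter_def cls_mult tletter_def inv_gT flip: gT_def)

lemma cls_phi_letter_T_above:
  assumes "1 \<le> im" "im + 1 \<le> i" "i \<le> int r"
  shows "cls (r + 1) (phi_letter r im (T i)) = gT (r + 1) (i + 1)"
proof -
  have "(i - im) mod int r = i - im" using assms by (intro mod_pos_pos_trivial) auto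
  then show ?thesis using assms by (simp add: phi_letter_def tletter_def gT_def)
qed

lemma cls_phi_letter_Rho:
  "cls (r + 1) (phi_letter r im Rho) = inv\<^bsub>Hecke (r + 1)\<^esub> (gT (r + 1) (im + 1)) \<otimes>\<^bsub>Hecke (r + 1)\<^esub> gRho (r + 1)"
  using r by (simp add: phi_letter_def cls_mult gRho_def inv_gT)

lemma cls_phi_letter_RhoInv:
  "cls (r + 1) (phi_letter r im RhoInv) = gRhoInv (r + 1) \<otimes>\<^bsub>Hecke (r + 1)\<^esub> gT (r + 1) (im + 1)"
  by (simp add: phi_letter_def cls_mult gRhoInv_def tletter_def gT_def)

end

theorem mainTheorem8:
  fixes r :: nat and im :: int
  assumes "r > 2" and "1 \<le> im" and "im \<le> int r - 1"
  shows "\<exists>\<phi> \<in> hecke_alg_hom r (r + 1).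
           inj_on \<phi> (carrier (Hecke r)) \<and>
           (\<forall>i. 1 \<le> i \<and> i < im \<longrightarrow> \<phi> (gT r i) = gT (r + 1) i) \<and>
           \<phi> (gT r im) = gT (r + 1) im \<otimes>\<^bsub>Hecke (r + 1)\<^esub> gT (r + 1) (im + 1)
                          \<otimes>\<^bsub>Hecke (r + 1)\<^esub> inv\<^bsub>Hecke (r + 1)\<^esub> (gT (r + 1) im) \<and>
           (\<forall>i. im + 1 \<le> i \<and> i \<le> int r \<longrightarrow> \<phi> (gT r i) = gT (r + 1) (i + 1)) \<and>
           \<phi> (gRho r) = inv\<^bsub>Hecke (r + 1)\<^esub> (gT (r + 1) (im + 1)) \<otimes>\<^bsub>Hecke (r + 1)\<^esub> gRho (r + 1) \<and>
           \<phi> (gRhoInv r) = gRhoInv (r + 1) \<otimes>\<^bsub>Hecke (r + 1)\<^esub> gT (r + 1) (im + 1)"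
proof -
  let ?F = "phi_letter r im"
  have ideal: "subst_hom ?F ` hecke_ideal r \<subseteq> hecke_ideal (r + 1)"
    by (rule subst_phi_ideal[OF assms(1)])
  have reflects: "subst_hom ?F x \<in> hecke_ideal (r + 1) \<Longrightarrow> x \<in> hecke_ideal r" for x
    by (rule subst_phi_reflects_ideal[OF assms(1)])
  let ?\<phi> = "induced_hom r (r + 1) ?F"
  have gen: "?\<phi> (cls r (letter g)) = cls (r + 1) (?F g)" for g
    unfolding induced_hom_cls[OF ideal] subst_hom_letter ..
  have gen_T: "?\<phi> (gT r i) = cls (r + 1) (?F (T i))" for i
    unfolding gT_def by (rule gen)
  have gen_Rho: "?\<phi> (gRho r) = cls (r + 1) (?F Rho)" and gen_RhoInv: "?\<phi> (gRhoInv r) = cls (r + 1) (?F RhoInv)"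
    unfolding gRho_def gRhoInv_def by (rule gen)+
  show ?thesis
  proof (intro bexI conjI allI impI)
    show "?\<phi> \<in> hecke_alg_hom r (r + 1)" by (rule induced_hom_hecke_alg_hom[OF ideal])
    show "inj_on ?\<phi> (carrier (Hecke r))" by (rule inj_on_induced_hom[OF ideal reflects])
  qed (use assms in \<open>simp_all only: gen_T gen_Rho gen_RhoInv cls_phi_letter_T_below cls_phi_letter_T_im
      cls_phi_letter_T_above cls_phi_letter_Rho cls_phi_letter_RhoInv\<close>)
qed

end
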